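(* (a) For $n=5$ and for every $n\ge 7$, $\sigma(K_{3,1,1},n)=4n-2$; equivalently, $4n-2$ is the least even integer such that every $n$-term graphical sequence $S$ with $\sigma(S)\ge 4n-2$ is potentially $K_{3,1,1}$-graphic. (b) For $n=6$: if $S$ is a $6$-term graphical sequence with $\sigma(S)\ge 22$, then either $S$ is potentially $K_{3,1,1}$-graphic or $S=(4,4,4,4,4,4)$; moreover $(4,4,4,4,4,4)$ is not potentially $K_{3,1,1}$-graphic, and consequently $\sigma(K_{3,1,1},6)=26$.
   Context: A finite sequence $S=(d_1,\dots,d_n)$ of non-negative integers is graphical if it is the degree sequence of some simple graph on $n$ vertices (a realization of $S$). Write $\sigma(S)=d_1+\dots+d_n$. For a graph $H$, a graphical sequence $S$ is potentially $H$-graphical if some realization of $S$ contains $H$ as a subgraph. $K_{3,1,1}$ denotes the complete 3-partite graph with parts of sizes $3,1,1$. $\sigma(H,n)$ denotes the minimum even integer $l$ such that every $n$-term graphical sequence $S$ with $\sigma(S)\ge l$ is potentially $H$-graphical. *)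

theory Defs
  imports Main
begin

definition simple_graph_on :: "nat \<Rightarrow> (nat \<Rightarrow> nat \<Rightarrow> bool) \<Rightarrow> bool" where
  "simple_graph_on n E \<longleftrightarrow>
     (\<forall>i j. E i j \<longrightarrow> i < n \<and> j < n) \<and>
     (\<forall>i. \<not> E i i) \<and> (\<forall>i j. E i j \<longrightarrow> E j i)"

definition degree :: "nat \<Rightarrow> (nat \<Rightarrow> nat \<Rightarrow> bool) \<Rightarrow> nat \<Rightarrow> nat" where
  "degree n E i = card {j. j < n \<and> E i j}"

definition realizes :: "(nat \<Rightarrow> nat \<Rightarrow> bool) \<Rightarrow> nat list \<Rightarrow> bool" where
  "realizes E S \<longleftrightarrow> simple_graph_on (length S) E \<and>
     (\<forall>i < length S. degree (length S) E i = S ! i)"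

definition graphical :: "nat list \<Rightarrow> bool" where
  "graphical S \<longleftrightarrow> (\<exists>E. realizes E S)"

definition contains_subgraph ::
  "nat \<Rightarrow> (nat \<Rightarrow> nat \<Rightarrow> bool) \<Rightarrow> nat \<Rightarrow> (nat \<Rightarrow> nat \<Rightarrow> bool) \<Rightarrow> bool" where
  "contains_subgraph n E k F \<longleftrightarrow>
     (\<exists>f. inj_on f {0..<k} \<and> f ` {0..<k} \<subseteq> {0..<n} \<and>
          (\<forall>i<k. \<forall>j<k. F i j \<longrightarrow> E (f i) (f j)))"

definition potentially_graphic :: "nat \<Rightarrow> (nat \<Rightarrow> nat \<Rightarrow> bool) \<Rightarrow> nat list \<Rightarrow> bool" where
  "potentially_graphic k F S \<longleftrightarrow>
     graphical S \<and> (\<exists>E. realizes E S \<and> contains_subgraph (length S) E k F)"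

definition sigma_pot :: "nat \<Rightarrow> (nat \<Rightarrow> nat \<Rightarrow> bool) \<Rightarrow> nat \<Rightarrow> nat" where
  "sigma_pot k F n = (LEAST l. even l \<and>
     (\<forall>S. length S = n \<and> graphical S \<and> sum_list S \<ge> l \<longrightarrow> potentially_graphic k F S))"

definition part311 :: "nat \<Rightarrow> nat" where
  "part311 i = (if i < 3 then 0 else if i = 3 then 1 else 2)"

definition K311 :: "nat \<Rightarrow> nat \<Rightarrow> bool" where
  "K311 i j \<longleftrightarrow> i < 5 \<and> j < 5 \<and> part311 i \<noteq> part311 j"

end

(*
  Sequences are handled through their realizations: S is potentially K_{3,1,1}-graphic iff
  some realization contains a book, an edge uv with three common neighbours. By induction on
  n >= 5, every graph on n vertices with degree sum at least 4n - 2 is degree-equivalent to a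
  graph containing a book, unless it is 4-regular on 6 vertices (the octahedron, which has
  no book). If deleting some vertex x keeps the degree sum at least 4(n-1) - 2, a book
  realization of G - x extends by re-attaching x (a switch handles the octahedron). Otherwise
  every degree is large, and summing the failed inequalities leaves two cases: G is 4-regular,
  and for n >= 7 an explicit 4-regular graph with a book exists; or the sum is 4n - 2 and some
  x has degree 3. Then x is deleted and two non-adjacent neighbours are joined (after a switch
  if the neighbourhood of x is a triangle); in a book realization of the smaller graph, x is
  re-inserted on an edge outside the book and joined to its third neighbour, which restores
  all degrees. The wheel (n-1, 3, ..., 3) and the octahedron show that the bounds are sharp.
*)

theory Submission
  imports Defs
begin

section \<open>Graphs on a vertex set\<close>

definition graph_on :: "'a set \<Rightarrow> ('a \<Rightarrow> 'a \<Rightarrow> bool) \<Rightarrow> bool" where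
  "graph_on V E \<longleftrightarrow>
     (\<forall>i j. E i j \<longrightarrow> i \<in> V \<and> j \<in> V) \<and> (\<forall>i. \<not> E i i) \<and> (\<forall>i j. E i j \<longrightarrow> E j i)"

definition deg :: "'a set \<Rightarrow> ('a \<Rightarrow> 'a \<Rightarrow> bool) \<Rightarrow> 'a \<Rightarrow> nat" where
  "deg V E x = card {y \<in> V. E x y}"

abbreviation deg_sum :: "'a set \<Rightarrow> ('a \<Rightarrow> 'a \<Rightarrow> bool) \<Rightarrow> nat" where
  "deg_sum V E \<equiv> \<Sum>y\<in>V. deg V E y"

lemma graph_onD:
  assumes "graph_on V E" "E i j"
  shows "i \<in> V" "j \<in> V" "i \<noteq> j" "E j i"
  using assms unfolding graph_on_def by metis+

lemma graph_on_irrefl: "graph_on V E \<Longrightarrow> \<not> E i i"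
  unfolding graph_on_def by blast

lemma graph_on_sym: "graph_on V E \<Longrightarrow> E i j \<longleftrightarrow> E j i"
  unfolding graph_on_def by blast

lemma deg_le_card_diff:
  assumes "finite V" "N \<subseteq> V" "\<And>y. y \<in> N \<Longrightarrow> \<not> E x y"
  shows "deg V E x \<le> card V - card N"
proof -
  have "{y \<in> V. E x y} \<subseteq> V - N" using assms(3) by blast
  hence "card {y \<in> V. E x y} \<le> card (V - N)" using assms(1) by (intro card_mono) auto
  also have "\<dots> = card V - card N" using assms(1,2) by (meson card_Diff_subset finite_subset)
  finally show ?thesis unfolding deg_def .
qed

lemma deg_le:
  assumes "finite V" "graph_on V E" "x \<in> V"
  shows "deg V E x \<le> card V - 1"
proof -
  have "deg V E x \<le> card V - card {x}"
    by (rule deg_le_card_diff) (use assms graph_on_irrefl[OF assms(2)] in auto)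
  thus ?thesis by simp
qed

lemma deg_le_two_nonadj:
  assumes "finite V" "graph_on V E" "{x, s, t} \<subseteq> V" "distinct [x, s, t]" "\<not> E x s" "\<not> E x t"
  shows "deg V E x \<le> card V - 3"
proof -
  have "deg V E x \<le> card V - card {x, s, t}"
    by (rule deg_le_card_diff) (use assms graph_on_irrefl[OF assms(2)] in auto)
  thus ?thesis using assms(4) by simp
qed

lemma adj_if_deg_full:
  assumes "finite V" "graph_on V E" "x \<in> V" "deg V E x = card V - 1" "y \<in> V" "y \<noteq> x"
  shows "E x y"
proof (rule ccontr)
  assume "\<not> E x y"
  hence "deg V E x \<le> card V - card {x, y}"
    by (intro deg_le_card_diff) (use assms graph_on_irrefl[OF assms(2)] in auto)
  moreover have "card {x, y} \<le> card V" using assms by (intro card_mono) auto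
  ultimately show False using assms by simp
qed

lemma deg_pos:
  assumes "finite V" "graph_on V E" "E y x"
  shows "0 < deg V E y"
  using assms graph_onD(2)[OF assms(2,3)] unfolding deg_def by (auto simp: card_gt_0_iff)

definition del_vertex :: "'a \<Rightarrow> ('a \<Rightarrow> 'a \<Rightarrow> bool) \<Rightarrow> 'a \<Rightarrow> 'a \<Rightarrow> bool" where
  "del_vertex x E = (\<lambda>i j. E i j \<and> i \<noteq> x \<and> j \<noteq> x)"

definition add_vertex :: "'a \<Rightarrow> 'a set \<Rightarrow> ('a \<Rightarrow> 'a \<Rightarrow> bool) \<Rightarrow> 'a \<Rightarrow> 'a \<Rightarrow> bool" where
  "add_vertex x T E = (\<lambda>i j. E i j \<or> (i = x \<and> j \<in> T) \<or> (j = x \<and> i \<in> T))"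

definition del_edge :: "'a \<Rightarrow> 'a \<Rightarrow> ('a \<Rightarrow> 'a \<Rightarrow> bool) \<Rightarrow> 'a \<Rightarrow> 'a \<Rightarrow> bool" where
  "del_edge a b E = (\<lambda>i j. E i j \<and> \<not> ((i = a \<and> j = b) \<or> (i = b \<and> j = a)))"

definition add_edge :: "'a \<Rightarrow> 'a \<Rightarrow> ('a \<Rightarrow> 'a \<Rightarrow> bool) \<Rightarrow> 'a \<Rightarrow> 'a \<Rightarrow> bool" where
  "add_edge a b E = (\<lambda>i j. E i j \<or> (i = a \<and> j = b) \<or> (i = b \<and> j = a))"

lemma graph_on_del_vertex: "graph_on V E \<Longrightarrow> graph_on (V - {x}) (del_vertex x E)"
  unfolding graph_on_def del_vertex_def by blast

lemma deg_del_vertex: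
  assumes "graph_on V E" "y \<noteq> x"
  shows "deg (V - {x}) (del_vertex x E) y = deg V E y - (if E y x then 1 else 0)"
proof -
  have "{z \<in> V - {x}. del_vertex x E y z} = {z \<in> V. E y z} - {x}"
    using assms by (auto simp: del_vertex_def)
  thus ?thesis using graph_onD[OF assms(1)] by (simp add: deg_def card_Diff_singleton_if)
qed

lemma deg_sum_del_vertex:
  assumes "finite V" "graph_on V E" "x \<in> V"
  shows "deg_sum (V - {x}) (del_vertex x E) + 2 * deg V E x = deg_sum V E"
proof -
  let ?adj = "\<lambda>y. if E y x then 1 else (0::nat)"
  have "deg_sum (V - {x}) (del_vertex x E) + (\<Sum>y\<in>V - {x}. ?adj y) = (\<Sum>y\<in>V - {x}. deg V E y)"
    unfolding sum.distrib[symmetric] using deg_del_vertex[OF assms(2)] deg_pos[OF assms(1,2)]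
    by (intro sum.cong) auto
  moreover have "(\<Sum>y\<in>V - {x}. ?adj y) = deg V E x"
  proof -
    have "(V - {x}) \<inter> {y. E y x} = {y \<in> V. E x y}"
      using graph_onD[OF assms(2)] by blast
    thus ?thesis using assms(1) by (simp add: sum.If_cases deg_def)
  qed
  moreover have "deg_sum V E = deg V E x + (\<Sum>y\<in>V - {x}. deg V E y)"
    using assms by (simp add: sum.remove)
  ultimately show ?thesis by simp
qed

lemma even_deg_sum:
  assumes "finite V" "graph_on V E"
  shows "even (deg_sum V E)"
  using assms
proof (induction V arbitrary: E rule: finite_induct)
  case empty thus ?case by simp
next
  case (insert x V)
  have "graph_on V (del_vertex x E)"
    using graph_on_del_vertex[OF insert.prems, of x] insert.hyps(2) by simp
  hence "even (deg_sum V (del_vertex x E))" by (rule insert.IH)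
  moreover have "deg_sum V (del_vertex x E) + 2 * deg (insert x V) E x = deg_sum (insert x V) E"
    using deg_sum_del_vertex[OF _ insert.prems, of x] insert.hyps by simp
  ultimately show ?case by (metis dvd_add dvd_triv_left)
qed

lemma graph_on_add_vertex:
  "graph_on W E \<Longrightarrow> x \<notin> W \<Longrightarrow> T \<subseteq> W \<Longrightarrow> graph_on (insert x W) (add_vertex x T E)"
  unfolding graph_on_def add_vertex_def by blast

lemma deg_add_vertex:
  assumes "graph_on W E" "x \<notin> W" "T \<subseteq> W" "finite W" "y \<in> W"
  shows "deg (insert x W) (add_vertex x T E) y = deg W E y + (if y \<in> T then 1 else 0)"
proof -
  have "{z \<in> insert x W. add_vertex x T E y z} = {z \<in> W. E y z} \<union> (if y \<in> T then {x} else {})"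
    using assms graph_onD[OF assms(1)] by (auto simp: add_vertex_def)
  thus ?thesis using assms by (simp add: deg_def)
qed

lemma deg_add_vertex_new:
  assumes "graph_on W E" "x \<notin> W" "T \<subseteq> W"
  shows "deg (insert x W) (add_vertex x T E) x = card T"
proof -
  have "{z \<in> insert x W. add_vertex x T E x z} = T"
    using assms graph_onD[OF assms(1)] by (auto simp: add_vertex_def)
  thus ?thesis by (simp add: deg_def)
qed

lemma graph_on_add_edge:
  "graph_on V E \<Longrightarrow> a \<in> V \<Longrightarrow> b \<in> V \<Longrightarrow> a \<noteq> b \<Longrightarrow> graph_on V (add_edge a b E)"
  unfolding graph_on_def add_edge_def by blast

lemma deg_add_edge:
  assumes "finite V" "graph_on V E" "a \<in> V" "b \<in> V" "a \<noteq> b" "\<not> E a b"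
  shows "deg V (add_edge a b E) y = deg V E y + (if y = a \<or> y = b then 1 else 0)"
proof -
  have "{z \<in> V. add_edge a b E y z} =
      {z \<in> V. E y z} \<union> (if y = a then {b} else if y = b then {a} else {})"
    using assms by (auto simp: add_edge_def)
  moreover have "b \<notin> {z \<in> V. E a z}" "a \<notin> {z \<in> V. E b z}"
    using assms graph_on_sym[OF assms(2)] by auto
  ultimately show ?thesis using assms by (auto simp: deg_def)
qed

lemma graph_on_del_edge: "graph_on V E \<Longrightarrow> graph_on V (del_edge a b E)"
  unfolding graph_on_def del_edge_def by blast

lemma deg_del_edge:
  assumes "finite V" "graph_on V E" "E a b"
  shows "deg V (del_edge a b E) y = deg V E y - (if y = a \<or> y = b then 1 else 0)"
proof -
  have "a \<noteq> b" "E b a" using graph_onD[OF assms(2,3)] by auto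
  hence "{z \<in> V. del_edge a b E y z} =
      {z \<in> V. E y z} - (if y = a then {b} else if y = b then {a} else {})"
    by (auto simp: del_edge_def)
  thus ?thesis using assms graph_onD[OF assms(2,3)] by (auto simp: deg_def card_Diff_singleton_if)
qed

section \<open>Books\<close>

text \<open>The triangular book with spine \<open>u v\<close> and pages \<open>a, b, c\<close>, i.e. a copy of K_{3,1,1}.\<close>
definition book_at :: "('a \<Rightarrow> 'a \<Rightarrow> bool) \<Rightarrow> 'a \<Rightarrow> 'a \<Rightarrow> 'a \<Rightarrow> 'a \<Rightarrow> 'a \<Rightarrow> bool" where
  "book_at E u v a b c \<longleftrightarrow> distinct [u, v, a, b, c] \<and>
     E u v \<and> E u a \<and> E u b \<and> E u c \<and> E v a \<and> E v b \<and> E v c"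

definition has_book :: "('a \<Rightarrow> 'a \<Rightarrow> bool) \<Rightarrow> bool" where
  "has_book E \<longleftrightarrow> (\<exists>u v a b c. book_at E u v a b c)"

definition book_edges :: "'a \<Rightarrow> 'a \<Rightarrow> 'a \<Rightarrow> 'a \<Rightarrow> 'a \<Rightarrow> ('a \<times> 'a) list" where
  "book_edges u v a b c = [(u, v), (v, u), (u, a), (a, u), (u, b), (b, u), (u, c), (c, u),
     (v, a), (a, v), (v, b), (b, v), (v, c), (c, v)]"

definition potentially_book :: "'a set \<Rightarrow> ('a \<Rightarrow> 'a \<Rightarrow> bool) \<Rightarrow> bool" where
  "potentially_book V E \<longleftrightarrow> (\<exists>F. graph_on V F \<and> (\<forall>x\<in>V. deg V F x = deg V E x) \<and> has_book F)"

lemma has_bookI: "book_at E u v a b c \<Longrightarrow> has_book E"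
  unfolding has_book_def by blast

lemma potentially_bookI: "graph_on V E \<Longrightarrow> has_book E \<Longrightarrow> potentially_book V E"
  unfolding potentially_book_def by blast

lemma potentially_book_cong:
  "potentially_book V F \<Longrightarrow> (\<forall>x\<in>V. deg V F x = deg V E x) \<Longrightarrow> potentially_book V E"
  unfolding potentially_book_def by auto

lemma book_at_mono: "book_at E u v a b c \<Longrightarrow> (\<And>i j. E i j \<Longrightarrow> F i j) \<Longrightarrow> book_at F u v a b c"
  unfolding book_at_def by blast

lemma has_book_mono: "has_book E \<Longrightarrow> (\<And>i j. E i j \<Longrightarrow> F i j) \<Longrightarrow> has_book F"
  unfolding has_book_def using book_at_mono by metis

lemma book_at_in: "graph_on V E \<Longrightarrow> book_at E u v a b c \<Longrightarrow> {u, v, a, b, c} \<subseteq> V"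
  unfolding book_at_def graph_on_def by auto

lemma book_at_del_edge:
  assumes "book_at E u v a b c" "(p, q) \<notin> set (book_edges u v a b c)"
  shows "book_at (del_edge p q E) u v a b c"
proof -
  have kept: "del_edge p q E s t"
    if "E s t" "(s, t) \<in> set (book_edges u v a b c)" "(t, s) \<in> set (book_edges u v a b c)" for s t
    using that assms(2) unfolding del_edge_def by auto
  show ?thesis using assms(1) unfolding book_at_def by (simp add: kept book_edges_def)
qed

lemma book_at_add_vertex: "book_at E u v a b c \<Longrightarrow> book_at (add_vertex x T E) u v a b c"
  by (erule book_at_mono) (simp add: add_vertex_def)

lemma spine_deg_ge_4:
  assumes "finite V" "graph_on V E" "book_at E u v a b c"
  shows "4 \<le> deg V E u" "4 \<le> deg V E v"
proof -
  have in_V: "{u, v, a, b, c} \<subseteq> V" by (rule book_at_in[OF assms(2,3)])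
  have d: "distinct [u, v, a, b, c]" using assms(3) unfolding book_at_def by blast
  have "{v, a, b, c} \<subseteq> {y \<in> V. E u y}" "{u, a, b, c} \<subseteq> {y \<in> V. E v y}"
    using assms(3) in_V graph_on_sym[OF assms(2)] unfolding book_at_def by auto
  hence "card {v, a, b, c} \<le> deg V E u" "card {u, a, b, c} \<le> deg V E v"
    unfolding deg_def using assms(1) by (auto intro: card_mono)
  thus "4 \<le> deg V E u" "4 \<le> deg V E v" using d by auto
qed

definition switch :: "'a \<Rightarrow> 'a \<Rightarrow> 'a \<Rightarrow> 'a \<Rightarrow> ('a \<Rightarrow> 'a \<Rightarrow> bool) \<Rightarrow> 'a \<Rightarrow> 'a \<Rightarrow> bool" where
  "switch a b c d E = add_edge a c (add_edge b d (del_edge a b (del_edge c d E)))"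

lemma switch_iff:
  "switch a b c d E i j \<longleftrightarrow>
     (E i j \<and> \<not> (i = a \<and> j = b) \<and> \<not> (i = b \<and> j = a) \<and> \<not> (i = c \<and> j = d) \<and> \<not> (i = d \<and> j = c))
     \<or> (i = a \<and> j = c) \<or> (i = c \<and> j = a) \<or> (i = b \<and> j = d) \<or> (i = d \<and> j = b)"
  unfolding switch_def add_edge_def del_edge_def by blast

lemma
  assumes "finite V" "graph_on V E" "E a b" "E c d" "\<not> E a c" "\<not> E b d" "distinct [a, b, c, d]"
  shows graph_on_switch: "graph_on V (switch a b c d E)"
    and deg_switch: "y \<in> V \<Longrightarrow> deg V (switch a b c d E) y = deg V E y"
proof -
  have in_V: "a \<in> V" "b \<in> V" "c \<in> V" "d \<in> V" using graph_onD[OF assms(2)] assms(3,4) by blast+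
  let ?E1 = "del_edge c d E" let ?E2 = "del_edge a b ?E1" let ?E3 = "add_edge b d ?E2"
  have g1: "graph_on V ?E1" by (rule graph_on_del_edge[OF assms(2)])
  have g2: "graph_on V ?E2" by (rule graph_on_del_edge[OF g1])
  have g3: "graph_on V ?E3" using graph_on_add_edge[OF g2] in_V assms(7) by simp
  show "graph_on V (switch a b c d E)"
    unfolding switch_def using graph_on_add_edge[OF g3] in_V assms(7) by simp
  have e1: "?E1 a b" using assms(3,7) by (auto simp: del_edge_def)
  have e2: "\<not> ?E2 b d" using assms(6) by (simp add: del_edge_def)
  have e3: "\<not> ?E3 a c" using assms(5,7) by (auto simp: del_edge_def add_edge_def)
  have pos: "0 < deg V E a" "0 < deg V E b" "0 < deg V E c" "0 < deg V E d"
    using deg_pos[OF assms(1,2)] assms(3,4) graph_onD(4)[OF assms(2)] by blast+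
  have "deg V (switch a b c d E) y = deg V ?E3 y + (if y = a \<or> y = c then 1 else 0)"
    unfolding switch_def using deg_add_edge[OF assms(1) g3 in_V(1,3) _ e3] assms(7) by simp
  also have "deg V ?E3 y = deg V ?E2 y + (if y = b \<or> y = d then 1 else 0)"
    using deg_add_edge[OF assms(1) g2 in_V(2,4) _ e2] assms(7) by simp
  also have "deg V ?E2 y = deg V ?E1 y - (if y = a \<or> y = b then 1 else 0)"
    by (rule deg_del_edge[OF assms(1) g1 e1])
  also have "deg V ?E1 y = deg V E y - (if y = c \<or> y = d then 1 else 0)"
    by (rule deg_del_edge[OF assms(1,2,4)])
  finally show "deg V (switch a b c d E) y = deg V E y" using pos assms(7) by auto
qed

definition insert_on_edge :: "'a \<Rightarrow> 'a \<Rightarrow> 'a \<Rightarrow> 'a \<Rightarrow> ('a \<Rightarrow> 'a \<Rightarrow> bool) \<Rightarrow> 'a \<Rightarrow> 'a \<Rightarrow> bool" where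
  "insert_on_edge x p q c F = add_vertex x {p, q, c} (del_edge p q F)"

lemma insert_on_edge_iff:
  "insert_on_edge x p q c F i j \<longleftrightarrow>
     (F i j \<and> \<not> (i = p \<and> j = q) \<and> \<not> (i = q \<and> j = p)) \<or> (i = x \<and> j \<in> {p, q, c}) \<or> (j = x \<and> i \<in> {p, q, c})"
  unfolding insert_on_edge_def add_vertex_def del_edge_def by blast

lemma
  assumes "finite W" "graph_on W F" "x \<notin> W" "F p q" "c \<in> W" "c \<noteq> p" "c \<noteq> q"
  shows graph_on_insert_on_edge: "graph_on (insert x W) (insert_on_edge x p q c F)"
    and deg_insert_on_edge:
      "y \<in> W \<Longrightarrow> deg (insert x W) (insert_on_edge x p q c F) y = deg W F y + (if y = c then 1 else 0)"
    and deg_insert_on_edge_new: "deg (insert x W) (insert_on_edge x p q c F) x = 3"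
proof -
  have pq: "p \<in> W" "q \<in> W" "p \<noteq> q" using graph_onD[OF assms(2,4)] by blast+
  have T: "{p, q, c} \<subseteq> W" using pq assms(5) by auto
  have g: "graph_on W (del_edge p q F)" by (rule graph_on_del_edge[OF assms(2)])
  show "graph_on (insert x W) (insert_on_edge x p q c F)"
    unfolding insert_on_edge_def by (rule graph_on_add_vertex[OF g assms(3) T])
  show "deg (insert x W) (insert_on_edge x p q c F) x = 3"
    unfolding insert_on_edge_def using deg_add_vertex_new[OF g assms(3) T] pq assms(6,7) by simp
  assume "y \<in> W"
  have pos: "0 < deg W F p" "0 < deg W F q"
    using deg_pos[OF assms(1,2)] assms(4) graph_onD(4)[OF assms(2,4)] by blast+
  have "deg (insert x W) (insert_on_edge x p q c F) y
      = deg W (del_edge p q F) y + (if y \<in> {p, q, c} then 1 else 0)"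
    unfolding insert_on_edge_def by (rule deg_add_vertex[OF g assms(3) T assms(1) \<open>y \<in> W\<close>])
  also have "deg W (del_edge p q F) y = deg W F y - (if y = p \<or> y = q then 1 else 0)"
    by (rule deg_del_edge[OF assms(1,2,4)])
  finally show "deg (insert x W) (insert_on_edge x p q c F) y = deg W F y + (if y = c then 1 else 0)"
    using pos assms(6,7) by auto
qed

lemma book_at_insert_on_edge:
  "book_at F u v a b c' \<Longrightarrow> (p, q) \<notin> set (book_edges u v a b c') \<Longrightarrow>
    book_at (insert_on_edge x p q c F) u v a b c'"
  unfolding insert_on_edge_def by (intro book_at_add_vertex book_at_del_edge)

section \<open>Re-inserting a vertex next to a book\<close>

lemma exists_eq_bound_if_sum_large:
  assumes "finite A" "\<And>x. x \<in> A \<Longrightarrow> f x \<le> k" "card A * (k - 1) < sum f A"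
  shows "\<exists>x\<in>A. f x = k"
proof (rule ccontr)
  assume "\<not> ?thesis"
  hence "\<And>x. x \<in> A \<Longrightarrow> f x \<le> k - 1" using assms(2) by force
  hence "sum f A \<le> card A * (k - 1)" using sum_bounded_above[of A f "k - 1"] by simp
  thus False using assms(3) by simp
qed

lemma two_full_vertices_card5:
  assumes "finite W" "card W = 5" "graph_on W H" "18 \<le> deg_sum W H" "c \<in> W"
  shows "\<exists>u v. u \<in> W - {c} \<and> v \<in> W - {c} \<and> u \<noteq> v \<and> deg W H u = 4 \<and> deg W H v = 4"
proof -
  have le: "\<And>y. y \<in> W \<Longrightarrow> deg W H y \<le> 4" using deg_le[OF assms(1,3)] assms(2) by fastforce
  have s1: "deg_sum W H = deg W H c + (\<Sum>y\<in>W - {c}. deg W H y)"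
    using assms by (simp add: sum.remove)
  have "card (W - {c}) = 4" using assms by simp
  moreover have "14 \<le> (\<Sum>y\<in>W - {c}. deg W H y)" using s1 le[OF assms(5)] assms(4) by linarith
  ultimately obtain u where u: "u \<in> W - {c}" "deg W H u = 4"
    using exists_eq_bound_if_sum_large[of "W - {c}" "deg W H" 4] le assms(1) by force
  have s2: "(\<Sum>y\<in>W - {c}. deg W H y) = deg W H u + (\<Sum>y\<in>W - {c} - {u}. deg W H y)"
    using assms u by (simp add: sum.remove)
  have "card (W - {c} - {u}) = 3" using assms u by simp
  moreover have "10 \<le> (\<Sum>y\<in>W - {c} - {u}. deg W H y)" using s1 s2 u le[OF assms(5)] assms(4) by linarith
  ultimately obtain v where v: "v \<in> W - {c} - {u}" "deg W H v = 4"
    using exists_eq_bound_if_sum_large[of "W - {c} - {u}" "deg W H" 4] le assms(1) by force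
  show ?thesis using u v by blast
qed

lemma has_book_card5:
  assumes "finite W" "card W = 5" "graph_on W H" "18 \<le> deg_sum W H"
  shows "has_book H"
proof -
  obtain c where "c \<in> W" using assms(2) by fastforce
  then obtain u v where uv: "u \<in> W" "v \<in> W" "u \<noteq> v" "deg W H u = 4" "deg W H v = 4"
    using two_full_vertices_card5[OF assms] by blast
  have "card (W - {u, v}) = 3" using assms uv by (simp add: card_Diff_subset)
  then obtain a b c where abc: "W - {u, v} = {a, b, c}" "a \<noteq> b" "b \<noteq> c" "a \<noteq> c"
    by (auto simp: card_3_iff)
  have "H u y" "H v y" if "y \<in> W" "y \<noteq> u" "y \<noteq> v" for y
    using adj_if_deg_full[OF assms(1,3)] uv that assms(2) by auto
  moreover have "H u v" using adj_if_deg_full[OF assms(1,3) uv(1)] uv assms(2) by simp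
  ultimately have "book_at H u v a b c" unfolding book_at_def using uv abc by auto
  thus ?thesis by (rule has_bookI)
qed

lemma exists_edge_avoiding:
  assumes "finite W" "graph_on W H" "c \<in> W" "finite X" "card X + 2 * deg W H c < deg_sum W H"
  shows "\<exists>p q. H p q \<and> p \<noteq> c \<and> q \<noteq> c \<and> (p, q) \<notin> X"
proof -
  let ?P = "SIGMA p:W - {c}. {q \<in> W - {c}. H p q}"
  have "card ?P = (\<Sum>p\<in>W - {c}. card {q \<in> W - {c}. H p q})"
    by (rule card_SigmaI) (use assms(1) in simp_all)
  also have "\<dots> = deg_sum (W - {c}) (del_vertex c H)"
    unfolding deg_def del_vertex_def by (intro sum.cong) (auto intro!: arg_cong[where f = card])
  finally have "card ?P + 2 * deg W H c = deg_sum W H"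
    using deg_sum_del_vertex[OF assms(1,2,3)] by simp
  hence "card X < card ?P" using assms(5) by simp
  hence "\<not> ?P \<subseteq> X" using card_mono[OF assms(4)] by (meson not_le)
  thus ?thesis by auto
qed

lemma card_book_edges_avoiding:
  assumes "distinct [u, v, a, b, c]" "z \<in> {u, v, a, b, c}"
  shows "card (set (book_edges u v a b c) - {(p, q). p = z \<or> q = z}) \<le> 10"
proof -
  let ?avoiding = "filter (\<lambda>(p, q). p \<noteq> z \<and> q \<noteq> z) (book_edges u v a b c)"
  have "u \<noteq> v" "u \<noteq> a" "u \<noteq> b" "u \<noteq> c" "v \<noteq> a" "v \<noteq> b" "v \<noteq> c"
    "a \<noteq> b" "a \<noteq> c" "b \<noteq> c" using assms(1) by auto
  note neq = this this[symmetric]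
  have "card (set (book_edges u v a b c) - {(p, q). p = z \<or> q = z}) = card (set ?avoiding)"
    by (rule arg_cong[where f = card]) auto
  also have "\<dots> \<le> length ?avoiding" by (rule card_length)
  also have "\<dots> \<le> 10"
    using assms(2) by (elim insertE emptyE) (simp_all add: book_edges_def neq)
  finally show ?thesis .
qed

lemma book_at_through_vertex:
  assumes "finite W" "graph_on W H" "book_at H u v a b c'" "c \<in> W" "c \<notin> {u, v, a, b, c'}"
    "card W - 3 < deg W H c"
  shows "\<exists>u v a b c''. book_at H u v a b c'' \<and> c \<in> {u, v, a, b, c''}"
proof -
  have in_W: "{u, v, a, b, c'} \<subseteq> W" by (rule book_at_in[OF assms(2,3)])
  have d: "distinct [u, v, a, b, c']" and e: "H u v" "H u a" "H u b" "H u c'" "H v a" "H v b" "H v c'"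
    using assms(3) unfolding book_at_def by auto
  have two: "H c s \<or> H c t" if "{s, t} \<subseteq> {u, v, a, b, c'}" "s \<noteq> t" for s t
  proof (rule ccontr)
    assume "\<not> (H c s \<or> H c t)"
    hence "deg W H c \<le> card W - 3"
      using deg_le_two_nonadj[OF assms(1,2), of c s t] that in_W assms(4,5) by auto
    thus False using assms(6) by simp
  qed
  have sym: "H c y \<Longrightarrow> H y c" for y using graph_on_sym[OF assms(2)] by blast
  consider "H c u" "H c v" | "H c u" "\<not> H c v" | "\<not> H c u" by blast
  thus ?thesis
  proof cases
    case 1
    hence "book_at H u v a b c" using d e assms(5) sym unfolding book_at_def by auto
    thus ?thesis by blast
  next
    case 2
    hence "H c a" "H c b" "H c c'" using two[of v a] two[of v b] two[of v c'] d by auto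
    hence "book_at H u c a b c'" using 2 d e assms(5) sym unfolding book_at_def by auto
    thus ?thesis by blast
  next
    case 3
    hence "H c a" "H c b" "H c c'" "H c v" using two[of u a] two[of u b] two[of u c'] two[of u v] d by auto
    hence "book_at H v c a b c'" using d e assms(5) sym graph_on_sym[OF assms(2)] unfolding book_at_def by auto
    thus ?thesis by blast
  qed
qed

text \<open>Edges avoiding \<open>c\<close>, counted with orientation, number \<open>deg_sum W H - 2 * deg W H c \<ge> 2 * card W\<close>.
  A book through \<open>c\<close> uses at most 10 of them and any book at most 14; if neither bound
  suffices, \<open>c\<close> has degree at least \<open>card W - 2\<close> and the book can be moved through \<open>c\<close>.\<close>
lemma book_and_edge_avoiding_card_ge6:
  assumes "finite W" "6 \<le> card W" "graph_on W H" "4 * card W - 2 \<le> deg_sum W H" "has_book H" "c \<in> W"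
  shows "\<exists>u v a b c' p q. book_at H u v a b c' \<and> H p q \<and> p \<noteq> c \<and> q \<noteq> c \<and>
    (p, q) \<notin> set (book_edges u v a b c')"
proof -
  have deg_c: "deg W H c \<le> card W - 1" by (rule deg_le[OF assms(1,3,6)])
  have through_c: "\<exists>p q. H p q \<and> p \<noteq> c \<and> q \<noteq> c \<and> (p, q) \<notin> set (book_edges u v a b c')"
    if "book_at H u v a b c'" "c \<in> {u, v, a, b, c'}" for u v a b c'
  proof -
    let ?X = "set (book_edges u v a b c') - {(p, q). p = c \<or> q = c}"
    have "card ?X \<le> 10"
      using that(1) by (intro card_book_edges_avoiding that(2)) (simp add: book_at_def)
    hence "card ?X + 2 * deg W H c < deg_sum W H" using deg_c assms(2,4) by linarith
    then obtain p q where "H p q" "p \<noteq> c" "q \<noteq> c" "(p, q) \<notin> ?X"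
      using exists_edge_avoiding[OF assms(1,3,6), of ?X] by auto
    thus ?thesis by blast
  qed
  obtain u v a b c' where book: "book_at H u v a b c'" using assms(5) unfolding has_book_def by blast
  consider "c \<in> {u, v, a, b, c'}" | "c \<notin> {u, v, a, b, c'}" "deg W H c \<le> card W - 3"
    | "c \<notin> {u, v, a, b, c'}" "card W - 3 < deg W H c" by force
  thus ?thesis
  proof cases
    case 1
    then obtain p q where "H p q" "p \<noteq> c" "q \<noteq> c" "(p, q) \<notin> set (book_edges u v a b c')"
      using through_c[OF book] by blast
    thus ?thesis using book by blast
  next
    case 2
    let ?X = "set (book_edges u v a b c')"
    have "card ?X \<le> 14" by (rule order_trans[OF card_length]) (simp add: book_edges_def)
    hence "card ?X + 2 * deg W H c < deg_sum W H" using 2 assms(2,4) by linarith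
    then obtain p q where "H p q" "p \<noteq> c" "q \<noteq> c" "(p, q) \<notin> ?X"
      using exists_edge_avoiding[OF assms(1,3,6), of ?X] by auto
    thus ?thesis using book by blast
  next
    case 3
    then obtain u v a b c'' where book': "book_at H u v a b c''" "c \<in> {u, v, a, b, c''}"
      using book_at_through_vertex[OF assms(1,3) book assms(6)] by blast
    then obtain p q where "H p q" "p \<noteq> c" "q \<noteq> c" "(p, q) \<notin> set (book_edges u v a b c'')"
      using through_c by blast
    thus ?thesis using book' by blast
  qed
qed

lemma book_and_edge_avoiding_card5:
  assumes "finite W" "card W = 5" "graph_on W H" "18 \<le> deg_sum W H" "c \<in> W"
  shows "\<exists>u v a b c' p q. book_at H u v a b c' \<and> H p q \<and> p \<noteq> c \<and> q \<noteq> c \<and>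
    (p, q) \<notin> set (book_edges u v a b c')"
proof -
  obtain u v where uv: "u \<in> W - {c}" "v \<in> W - {c}" "u \<noteq> v" "deg W H u = 4" "deg W H v = 4"
    using two_full_vertices_card5[OF assms] by blast
  have "card (W - {u, v, c}) = 2" using assms uv by (simp add: card_Diff_subset)
  then obtain a1 a2 where aa: "W - {u, v, c} = {a1, a2}" "a1 \<noteq> a2"
    by (auto simp: card_2_iff)
  have W: "W = {c, u, v, a1, a2}" using aa uv assms(5) by blast
  have full: "deg W H z = 4 \<Longrightarrow> z \<in> W \<Longrightarrow> y \<in> W \<Longrightarrow> y \<noteq> z \<Longrightarrow> H z y" for z y
    using adj_if_deg_full[OF assms(1,3)] assms(2) by simp
  have a: "a1 \<in> W" "a2 \<in> W" "a1 \<notin> {u, v, c}" "a2 \<notin> {u, v, c}" using aa by blast+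
  show ?thesis
  proof (cases "H a1 a2")
    case True
    have "book_at H u v a1 a2 c" unfolding book_at_def using full uv a aa(2) assms(5) by auto
    moreover have "(a1, a2) \<notin> set (book_edges u v a1 a2 c)" using a uv by (auto simp: book_edges_def)
    ultimately show ?thesis using True a by blast
  next
    case False
    have "deg W H a1 \<le> card W - card {a1, a2}" "deg W H a2 \<le> card W - card {a1, a2}"
      using False graph_on_sym[OF assms(3)] graph_on_irrefl[OF assms(3)] a
      by (auto intro!: deg_le_card_diff[OF assms(1)])
    hence le3: "deg W H a1 \<le> 3" "deg W H a2 \<le> 3" using aa(2) assms(2) by auto
    have "deg_sum W H = (\<Sum>y\<in>{c, u, v, a1, a2}. deg W H y)"
      by (rule arg_cong[where f = "sum (deg W H)"]) (rule W)
    moreover have "c \<notin> {u, v, a1, a2}" "u \<notin> {v, a1, a2}" "v \<notin> {a1, a2}" "a1 \<notin> {a2}"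
      using uv a aa(2) by auto
    ultimately have "deg_sum W H = deg W H c + deg W H u + deg W H v + deg W H a1 + deg W H a2"
      by (simp add: add.assoc)
    moreover have "deg W H c \<le> 4" using deg_le[OF assms(1,3,5)] assms(2) by simp
    ultimately have "deg W H c = 4" using le3 assms(4) uv by linarith
    hence "book_at H u c v a1 a2" unfolding book_at_def using full uv a aa(2) assms(5) by auto
    moreover have "(v, a1) \<notin> set (book_edges u c v a1 a2)" using a uv by (auto simp: book_edges_def)
    ultimately show ?thesis using full[of v a1] a uv by blast
  qed
qed

lemma exists_insertion_keeping_book:
  assumes "finite W" "5 \<le> card W" "graph_on W H" "4 * card W - 2 \<le> deg_sum W H" "has_book H" "c \<in> W"
  shows "\<exists>p q. H p q \<and> p \<noteq> c \<and> q \<noteq> c \<and> has_book (insert_on_edge x p q c H)"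
proof -
  have "\<exists>u v a b c' p q. book_at H u v a b c' \<and> H p q \<and> p \<noteq> c \<and> q \<noteq> c \<and>
      (p, q) \<notin> set (book_edges u v a b c')"
  proof (cases "card W = 5")
    case True thus ?thesis using book_and_edge_avoiding_card5 assms by simp
  next
    case False
    thus ?thesis using book_and_edge_avoiding_card_ge6[OF assms(1) _ assms(3-6)] assms(2) by simp
  qed
  thus ?thesis using book_at_insert_on_edge has_bookI by metis
qed

section \<open>The octahedron\<close>

definition octahedral :: "'a set \<Rightarrow> ('a \<Rightarrow> 'a \<Rightarrow> bool) \<Rightarrow> bool" where
  "octahedral W H \<longleftrightarrow> finite W \<and> card W = 6 \<and> graph_on W H \<and> (\<forall>y\<in>W. deg W H y = 4)"

definition antipode :: "'a set \<Rightarrow> ('a \<Rightarrow> 'a \<Rightarrow> bool) \<Rightarrow> 'a \<Rightarrow> 'a" where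
  "antipode W H s = (SOME t. t \<in> W \<and> t \<noteq> s \<and> \<not> H s t)"

lemma octahedral_antipode:
  assumes "octahedral W H" "s \<in> W"
  shows "antipode W H s \<in> W" "antipode W H s \<noteq> s" "\<not> H s (antipode W H s)"
    and "t \<in> W \<Longrightarrow> t \<noteq> s \<Longrightarrow> \<not> H s t \<Longrightarrow> t = antipode W H s"
proof -
  have W: "finite W" "card W = 6" "graph_on W H" "deg W H s = 4"
    using assms unfolding octahedral_def by auto
  have "\<exists>t. t \<in> W \<and> t \<noteq> s \<and> \<not> H s t"
  proof (rule ccontr)
    assume "\<not> ?thesis"
    hence "{y \<in> W. H s y} = W - {s}" using graph_onD(2,3)[OF W(3)] by blast
    thus False using W assms(2) by (simp add: deg_def)
  qed
  hence a: "antipode W H s \<in> W \<and> antipode W H s \<noteq> s \<and> \<not> H s (antipode W H s)"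
    unfolding antipode_def by (rule someI_ex)
  thus "antipode W H s \<in> W" "antipode W H s \<noteq> s" "\<not> H s (antipode W H s)" by auto
  show "t = antipode W H s" if "t \<in> W" "t \<noteq> s" "\<not> H s t"
  proof (rule ccontr)
    assume "t \<noteq> antipode W H s"
    hence "deg W H s \<le> card W - 3"
      using deg_le_two_nonadj[OF W(1,3), of s t "antipode W H s"] a that assms(2) by auto
    thus False using W by simp
  qed
qed

lemma octahedral_adj_iff:
  assumes "octahedral W H" "s \<in> W" "t \<in> W"
  shows "H s t \<longleftrightarrow> s \<noteq> t \<and> t \<noteq> antipode W H s"
proof -
  have "graph_on W H" using assms(1) unfolding octahedral_def by simp
  thus ?thesis using octahedral_antipode[OF assms(1,2)] assms(3) graph_on_irrefl by metis
qed

lemma antipode_antipode: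
  assumes "octahedral W H" "s \<in> W"
  shows "antipode W H (antipode W H s) = s"
proof -
  let ?t = "antipode W H s"
  have "graph_on W H" using assms(1) unfolding octahedral_def by simp
  hence "\<not> H ?t s" using octahedral_antipode(3)[OF assms] graph_on_sym by metis
  thus ?thesis using octahedral_antipode[OF assms] octahedral_antipode(4)[OF assms(1), of ?t s] assms(2)
    by metis
qed

lemma antipode_eq_iff:
  "octahedral W H \<Longrightarrow> s \<in> W \<Longrightarrow> t \<in> W \<Longrightarrow> antipode W H s = antipode W H t \<longleftrightarrow> s = t"
  using antipode_antipode by metis

lemma exists_two_outside:
  assumes "finite W" "card W = 6" "A \<subseteq> W" "card A \<le> 4"
  shows "\<exists>r1 r2. r1 \<in> W - A \<and> r2 \<in> W - A \<and> r1 \<noteq> r2"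
proof -
  have "2 \<le> card (W - A)" using assms card_Diff_subset[of A W] finite_subset[OF assms(3,1)] by simp
  then obtain B where "B \<subseteq> W - A" "card B = 2" by (meson obtain_subset_with_card_n)
  thus ?thesis by (auto simp: card_2_iff)
qed

lemma card4_le: "card {a, b, c, d} \<le> 4"
  using card_length[of "[a, b, c, d]"] by simp

lemma octahedral_no_book:
  assumes "octahedral W H"
  shows "\<not> has_book H"
proof
  assume "has_book H"
  then obtain u v a b c where book: "book_at H u v a b c" unfolding has_book_def by blast
  have W: "finite W" "card W = 6" "graph_on W H" using assms unfolding octahedral_def by auto
  have in_W: "u \<in> W" "v \<in> W" "a \<in> W" "b \<in> W" "c \<in> W" using book_at_in[OF W(3) book] by auto
  have nbr: "t \<noteq> antipode W H s" if "s \<in> W" "t \<in> W" "H s t" for s t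
    using octahedral_adj_iff[OF assms that(1,2)] that(3) by simp
  have "H v u" using book graph_on_sym[OF W(3)] unfolding book_at_def by blast
  hence "antipode W H u \<notin> {u, v, a, b, c}" "antipode W H v \<notin> {u, v, a, b, c}"
    using book nbr in_W octahedral_antipode(2)[OF assms] unfolding book_at_def by blast+
  moreover have "antipode W H u \<noteq> antipode W H v"
    using antipode_eq_iff[OF assms in_W(1,2)] book unfolding book_at_def by simp
  ultimately have "distinct [antipode W H u, antipode W H v, u, v, a, b, c]"
    using book unfolding book_at_def by simp
  hence "card {antipode W H u, antipode W H v, u, v, a, b, c} = 7"
    using distinct_card[of "[antipode W H u, antipode W H v, u, v, a, b, c]"] by simp
  moreover have "{antipode W H u, antipode W H v, u, v, a, b, c} \<subseteq> W"
    using in_W octahedral_antipode(1)[OF assms] by auto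
  ultimately have "7 \<le> card W" using card_mono[OF W(1)] by metis
  thus False using W(2) by simp
qed

lemma octahedral_insertion_point:
  assumes "octahedral W G" "c \<in> W" "x \<notin> W"
  shows "\<exists>p q. G p q \<and> p \<noteq> c \<and> q \<noteq> c \<and> has_book (insert_on_edge x p q c G)"
proof -
  have W: "finite W" "card W = 6" using assms(1) unfolding octahedral_def by auto
  have adj: "G s t \<longleftrightarrow> s \<noteq> t \<and> t \<noteq> antipode W G s" if "s \<in> W" "t \<in> W" for s t
    using octahedral_adj_iff[OF assms(1) that] .
  let ?c' = "antipode W G c"
  have c': "?c' \<in> W" "?c' \<noteq> c" using octahedral_antipode(1,2)[OF assms(1,2)] by auto
  have "{c, ?c'} \<subseteq> W" "card {c, ?c'} \<le> 4" using assms(2) c' by auto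
  then obtain p where "p \<in> W - {c, ?c'}" using exists_two_outside[OF W] by meson
  hence p: "p \<in> W" "p \<noteq> c" "p \<noteq> ?c'" by auto
  let ?p' = "antipode W G p"
  have "G c p" using adj[OF assms(2) p(1)] p by simp
  have "?p' \<noteq> ?c'" using antipode_eq_iff[OF assms(1) p(1) assms(2)] p(2) by simp
  hence "G p ?c'" using adj[OF p(1) c'(1)] p by simp
  have "{c, ?c', p, ?p'} \<subseteq> W" using assms(2) c'(1) p(1) octahedral_antipode(1)[OF assms(1) p(1)] by auto
  then obtain r1 r2 where r: "r1 \<in> W - {c, ?c', p, ?p'}" "r2 \<in> W - {c, ?c', p, ?p'}" "r1 \<noteq> r2"
    using exists_two_outside[OF W _ card4_le] by meson
  have "G c r1" "G c r2" "G p r1" "G p r2" using adj r assms(2) p(1) by auto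
  moreover have "r1 \<in> W" "r2 \<in> W" "r1 \<noteq> c" "r2 \<noteq> c" "r1 \<noteq> p" "r2 \<noteq> p" "r1 \<noteq> ?c'" "r2 \<noteq> ?c'"
    using r by auto
  moreover have "x \<noteq> c" "x \<noteq> p" "x \<noteq> r1" "x \<noteq> r2" using assms(2,3) p(1) r by auto
  ultimately have "book_at (insert_on_edge x p ?c' c G) c p r1 r2 x"
    unfolding book_at_def insert_on_edge_iff using \<open>G c p\<close> p c' r(3) by auto
  hence "has_book (insert_on_edge x p ?c' c G)" by (rule has_bookI)
  thus ?thesis using \<open>G p ?c'\<close> p(2) c'(2) by blast
qed

lemma octahedral_book_after_switch:
  assumes "octahedral W G" "y \<in> W" "p \<in> W" "p \<noteq> y" "p \<noteq> antipode W G y"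
  shows "has_book (add_edge y (antipode W G y) (del_edge p (antipode W G y) G))"
proof -
  let ?y' = "antipode W G y" and ?p' = "antipode W G p"
  have W: "finite W" "card W = 6" using assms(1) unfolding octahedral_def by auto
  have adjI: "G s t" if "s \<in> W" "t \<in> W" "s \<noteq> t" "t \<noteq> antipode W G s" for s t
    using octahedral_adj_iff[OF assms(1) that(1,2)] that(3,4) by simp
  have in_W: "?y' \<in> W" "?p' \<in> W" using octahedral_antipode(1)[OF assms(1)] assms(2,3) by auto
  have "?y' \<noteq> y" "?p' \<noteq> p" using octahedral_antipode(2)[OF assms(1)] assms(2,3) by auto
  moreover have "?p' \<noteq> y" using antipode_antipode[OF assms(1,3)] assms(5) by metis
  moreover have "?p' \<noteq> ?y'" using antipode_eq_iff[OF assms(1,3,2)] assms(4) by simp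
  moreover obtain r where r: "r \<in> W" "r \<noteq> y" "r \<noteq> ?y'" "r \<noteq> p" "r \<noteq> ?p'"
    using exists_two_outside[OF W _ card4_le, of y ?y' p ?p'] assms(2,3) in_W by auto
  moreover have "antipode W G r \<noteq> ?y'" "antipode W G r \<noteq> p" "antipode W G r \<noteq> ?p'"
    using r antipode_eq_iff[OF assms(1)] antipode_antipode[OF assms(1)] assms(2,3) by metis+
  hence "G r ?y'" "G r p" "G r ?p'" using adjI r in_W assms(3) by auto
  ultimately have "book_at (add_edge y ?y' (del_edge p ?y' G)) y r ?y' p ?p'"
    unfolding book_at_def add_edge_def del_edge_def using adjI assms(2-5) in_W by auto
  thus ?thesis by (rule has_bookI)
qed

section \<open>Reductions\<close>

lemma potentially_book_if_del_vertex:
  assumes "finite V" "graph_on V E" "x \<in> V" "potentially_book (V - {x}) (del_vertex x E)"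
  shows "potentially_book V E"
proof -
  define W where "W = V - {x}"
  define T where "T = {y \<in> W. E x y}"
  have W: "finite W" "x \<notin> W" "V = insert x W" "T \<subseteq> W" using assms(1,3) by (auto simp: W_def T_def)
  obtain F where F: "graph_on W F" "\<forall>y\<in>W. deg W F y = deg W (del_vertex x E) y" "has_book F"
    using assms(4) unfolding potentially_book_def W_def by blast
  have "deg V (add_vertex x T F) y = deg V E y" if "y \<in> V" for y
  proof (cases "y = x")
    case True
    have "{z \<in> V. E x z} = T" using graph_on_irrefl[OF assms(2), of x] by (auto simp: T_def W_def)
    thus ?thesis using True deg_add_vertex_new[OF F(1) W(2,4)] W(3) by (simp add: deg_def)
  next
    case False
    hence "y \<in> W" using that by (simp add: W_def)
    moreover have "y \<in> T \<longleftrightarrow> E y x" using \<open>y \<in> W\<close> graph_on_sym[OF assms(2)] by (auto simp: T_def)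
    moreover have "deg W (del_vertex x E) y = deg V E y - (if E y x then 1 else 0)"
      using deg_del_vertex[OF assms(2) False] by (simp add: W_def)
    ultimately show ?thesis
      using deg_add_vertex[OF F(1) W(2,4,1)] F(2) deg_pos[OF assms(1,2), of y x] W(3) by auto
  qed
  moreover have "graph_on V (add_vertex x T F)" using graph_on_add_vertex[OF F(1) W(2,4)] W(3) by simp
  moreover have "has_book (add_vertex x T F)"
    using F(3) book_at_add_vertex has_bookI unfolding has_book_def by metis
  ultimately show ?thesis unfolding potentially_book_def by blast
qed

lemma nbrs_of_vertex_over_octahedral:
  assumes "graph_on V E" "x \<in> V" "octahedral (V - {x}) (del_vertex x E)" "\<not> has_book E"
    "E x y" "E x z"
  shows "z = y \<or> z = antipode (V - {x}) (del_vertex x E) y"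
proof (rule ccontr)
  let ?W = "V - {x}" let ?G = "del_vertex x E"
  assume nz: "\<not> ?thesis"
  have O: "finite ?W" "card ?W = 6" using assms(3) unfolding octahedral_def by auto
  have yz: "y \<in> ?W" "z \<in> ?W" using graph_onD[OF assms(1)] assms(5,6) by auto
  have adj: "E s t \<longleftrightarrow> s \<noteq> t \<and> t \<noteq> antipode ?W ?G s" if "s \<in> ?W" "t \<in> ?W" for s t
    using octahedral_adj_iff[OF assms(3) that] that by (simp add: del_vertex_def)
  have "E y z" using adj[OF yz] nz by auto
  have "{y, z, antipode ?W ?G y, antipode ?W ?G z} \<subseteq> ?W"
    using yz octahedral_antipode(1)[OF assms(3)] by auto
  then obtain r1 r2 where r: "r1 \<in> ?W - {y, z, antipode ?W ?G y, antipode ?W ?G z}"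
    "r2 \<in> ?W - {y, z, antipode ?W ?G y, antipode ?W ?G z}" "r1 \<noteq> r2"
    using exists_two_outside[OF O _ card4_le] by meson
  have "E y r1" "E y r2" "E z r1" "E z r2" using adj[OF yz(1)] adj[OF yz(2)] r by auto
  moreover have "E y x" "E z x" using graph_on_sym[OF assms(1)] assms(5,6) by blast+
  ultimately have "book_at E y z x r1 r2"
    unfolding book_at_def using \<open>E y z\<close> r nz yz by auto
  thus False using assms(4) by (simp add: has_bookI)
qed

text \<open>Without a book, \<open>x\<close> sees at most an antipodal pair \<open>y, y'\<close> of the octahedron, so
  \<open>x y, p y'\<close> can be switched to \<open>x p, y y'\<close>.\<close>
lemma potentially_book_vertex_over_octahedral:
  assumes "finite V" "graph_on V E" "x \<in> V" "octahedral (V - {x}) (del_vertex x E)" "0 < deg V E x"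
  shows "potentially_book V E"
proof (cases "has_book E")
  case True thus ?thesis using assms(2) potentially_bookI by blast
next
  case False
  define W where "W = V - {x}"
  define G where "G = del_vertex x E"
  note O = assms(4)[folded W_def G_def]
  have W: "finite W" "card W = 6" "x \<notin> W" using O unfolding octahedral_def W_def by auto
  have E_G: "E s t \<longleftrightarrow> G s t" if "s \<in> W" "t \<in> W" for s t
    using that by (simp add: G_def del_vertex_def W_def)
  obtain y where "E x y" using assms(5) unfolding deg_def by (auto simp: card_gt_0_iff)
  hence y: "y \<in> W" using graph_onD[OF assms(2)] by (auto simp: W_def)
  define y' where "y' = antipode W G y"
  have y': "y' \<in> W" "y' \<noteq> y" "\<not> G y y'" using octahedral_antipode(1-3)[OF O y] unfolding y'_def by auto
  have "{y, y'} \<subseteq> W" "card {y, y'} \<le> 4" using y y' by auto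
  then obtain p where "p \<in> W - {y, y'}" using exists_two_outside[OF W(1,2)] by meson
  hence p: "p \<in> W" "p \<noteq> y" "p \<noteq> y'" by auto
  have "\<not> E x p"
    using nbrs_of_vertex_over_octahedral[OF assms(2,3,4) False \<open>E x y\<close>] p(2,3)
    unfolding W_def G_def y'_def by blast
  moreover have "E p y'"
    using octahedral_adj_iff[OF O p(1) y'(1)] antipode_eq_iff[OF O p(1) y] p(2,3) E_G[OF p(1) y'(1)]
    unfolding y'_def by simp
  moreover have "\<not> E y y'" using E_G[OF y y'(1)] y'(3) by simp
  moreover have "distinct [x, y, p, y']" using W(3) y p y' by auto
  ultimately have switched: "graph_on V (switch x y p y' E)"
    "\<forall>z\<in>V. deg V (switch x y p y' E) z = deg V E z"
    using graph_on_switch[OF assms(1,2) \<open>E x y\<close>] deg_switch[OF assms(1,2) \<open>E x y\<close>] by auto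
  have "has_book (add_edge y y' (del_edge p y' G))"
    using octahedral_book_after_switch[OF O y p(1,2)] p(3) unfolding y'_def by simp
  moreover have "switch x y p y' E i j" if "add_edge y y' (del_edge p y' G) i j" for i j
    using that unfolding switch_iff add_edge_def del_edge_def G_def del_vertex_def by auto
  ultimately have "has_book (switch x y p y' E)" by (rule has_book_mono)
  hence "potentially_book V (switch x y p y' E)" by (rule potentially_bookI[OF switched(1)])
  thus ?thesis using switched(2) potentially_book_cong by blast
qed

definition forces_book :: "'a set \<Rightarrow> bool" where
  "forces_book W \<longleftrightarrow> (\<forall>H. graph_on W H \<longrightarrow> 4 * card W - 2 \<le> deg_sum W H \<longrightarrow>
     potentially_book W H \<or> octahedral W H)"

lemma exists_realization_with_insertion_point:
  assumes "finite W" "5 \<le> card W" "graph_on W G" "4 * card W - 2 \<le> deg_sum W G" "forces_book W"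
    "c \<in> W" "x \<notin> W"
  shows "\<exists>F p q. graph_on W F \<and> (\<forall>y\<in>W. deg W F y = deg W G y) \<and>
    F p q \<and> p \<noteq> c \<and> q \<noteq> c \<and> has_book (insert_on_edge x p q c F)"
proof -
  have "potentially_book W G \<or> octahedral W G" using assms(3-5) unfolding forces_book_def by blast
  thus ?thesis
  proof
    assume "potentially_book W G"
    then obtain F where F: "graph_on W F" "\<forall>y\<in>W. deg W F y = deg W G y" "has_book F"
      unfolding potentially_book_def by blast
    have "deg_sum W F = deg_sum W G" using F(2) by simp
    thus ?thesis using exists_insertion_keeping_book[OF assms(1,2) F(1) _ F(3) assms(6)] assms(4) F(1,2)
      by metis
  next
    assume "octahedral W G"
    then obtain p q where "G p q" "p \<noteq> c" "q \<noteq> c" "has_book (insert_on_edge x p q c G)"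
      using octahedral_insertion_point[OF _ assms(6,7)] by blast
    thus ?thesis using assms(3) by blast
  qed
qed

lemma potentially_book_by_degree3_reduction:
  assumes "finite V" "6 \<le> card V" "graph_on V E" "4 * card V - 2 \<le> deg_sum V E"
    "forces_book (V - {x})" "x \<in> V" "{y \<in> V. E x y} = {a, b, c}" "distinct [a, b, c]" "\<not> E a b"
  shows "potentially_book V E"
proof -
  define W where "W = V - {x}"
  define G where "G = add_edge a b (del_vertex x E)"
  have W: "finite W" "card W = card V - 1" "x \<notin> W" "V = insert x W"
    using assms(1,6) by (auto simp: W_def)
  have nbr: "E y x \<longleftrightarrow> y \<in> {a, b, c}" if "y \<in> V" for y
    using assms(7) graph_on_sym[OF assms(3)] that by blast
  have "E x a" "E x b" "E x c" using assms(7) by blast+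
  hence abc: "a \<in> W" "b \<in> W" "c \<in> W" using graph_onD(2,3)[OF assms(3)] by (auto simp: W_def)
  have G0: "graph_on W (del_vertex x E)" unfolding W_def by (rule graph_on_del_vertex[OF assms(3)])
  have "\<not> del_vertex x E a b" using assms(9) by (simp add: del_vertex_def)
  hence deg_G: "deg W G y = deg W (del_vertex x E) y + (if y = a \<or> y = b then 1 else 0)" for y
    unfolding G_def using deg_add_edge[OF W(1) G0 abc(1,2)] assms(8) by simp
  have deg_E: "deg V E y = deg W G y + (if y = c then 1 else 0)" if "y \<in> W" for y
  proof -
    have "y \<noteq> x" "y \<in> V" using that by (auto simp: W_def)
    moreover have "y \<in> {a, b, c} \<Longrightarrow> 0 < deg V E y" using deg_pos[OF assms(1,3)] nbr[OF \<open>y \<in> V\<close>] by blast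
    ultimately show ?thesis
      using deg_G[of y] deg_del_vertex[OF assms(3), of y x] nbr assms(8) unfolding W_def by auto
  qed
  have deg_x: "deg V E x = 3" using assms(7,8) by (simp add: deg_def)
  have "deg_sum V E = deg V E x + (\<Sum>y\<in>W. deg W G y + (if y = c then 1 else 0))"
    using W deg_E by simp
  also have "\<dots> = deg_sum W G + 4" using abc(3) W(1) deg_x by (simp add: sum.distrib)
  finally have "4 * card W - 2 \<le> deg_sum W G" using assms(2,4) W(2) by simp
  moreover have "graph_on W G" unfolding G_def using graph_on_add_edge[OF G0 abc(1,2)] assms(8) by simp
  ultimately obtain F p q where F: "graph_on W F" "\<forall>y\<in>W. deg W F y = deg W G y"
    "F p q" "p \<noteq> c" "q \<noteq> c" "has_book (insert_on_edge x p q c F)"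
    using exists_realization_with_insertion_point[OF W(1) _ _ _ _ abc(3) W(3)] assms(2,5) W(2)
    unfolding W_def by fastforce
  let ?H = "insert_on_edge x p q c F"
  have "graph_on V ?H" using graph_on_insert_on_edge[OF W(1) F(1) W(3) F(3) abc(3)] F(4,5) W(4) by auto
  moreover have "deg V ?H y = deg V E y" if "y \<in> V" for y
    using deg_insert_on_edge[OF W(1) F(1) W(3) F(3) abc(3)] deg_insert_on_edge_new[OF W(1) F(1) W(3) F(3) abc(3)]
      F(2,4,5) deg_E deg_x that W(4) by auto
  ultimately show ?thesis using F(6) unfolding potentially_book_def by blast
qed

lemma potentially_book_by_switch_and_reduction:
  assumes "finite V" "6 \<le> card V" "graph_on V E" "4 * card V - 2 \<le> deg_sum V E"
    "forces_book (V - {x})" "x \<in> V" "{z \<in> V. E x z} = {s, t, u}" "distinct [s, t, u]" "E s t"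
    "E y w" "\<not> E y s" "\<not> E w t" "y \<notin> {x, s, t, u}" "w \<notin> {x, s, t, u}"
  shows "potentially_book V E"
proof -
  have "\<not> E s y" "\<not> E t w" using assms(11,12) graph_on_sym[OF assms(3)] by blast+
  moreover have "distinct [s, t, y, w]" using assms(8,13,14) graph_onD(3)[OF assms(3,10)] by auto
  ultimately have switched: "graph_on V (switch s t y w E)" "\<forall>z\<in>V. deg V (switch s t y w E) z = deg V E z"
    using graph_on_switch[OF assms(1,3,9,10)] deg_switch[OF assms(1,3,9,10)] by auto
  have "x \<notin> {s, t, y, w}" using assms(7,13,14) graph_on_irrefl[OF assms(3)] by auto
  hence "{z \<in> V. switch s t y w E x z} = {s, t, u}" using assms(7) unfolding switch_iff by auto
  moreover have "\<not> switch s t y w E s t" using \<open>distinct [s, t, y, w]\<close> unfolding switch_iff by auto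
  moreover have "deg_sum V (switch s t y w E) = deg_sum V E" using switched(2) by simp
  ultimately have "potentially_book V (switch s t y w E)"
    using potentially_book_by_degree3_reduction[OF assms(1,2) switched(1) _ assms(5,6) _ assms(8)] assms(4)
    by simp
  thus ?thesis using switched(2) potentially_book_cong by blast
qed

lemma unique_nbr_in_triangle_nbrhood:
  assumes "graph_on V E" "\<not> has_book E" "{y \<in> V. E x y} = {a, b, c}" "E a b" "E a c" "E b c"
    "z \<notin> {x, a, b, c}" "E z s" "E z t" "s \<in> {a, b, c}" "t \<in> {a, b, c}"
  shows "s = t"
proof (rule ccontr)
  assume "s \<noteq> t"
  have sym: "E i j \<longleftrightarrow> E j i" for i j using graph_on_sym[OF assms(1)] .
  obtain r where r: "r \<in> {a, b, c}" "r \<noteq> s" "r \<noteq> t"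
    using assms(3-6,10,11) \<open>s \<noteq> t\<close> graph_on_irrefl[OF assms(1)] by auto
  have "x \<notin> {a, b, c}" using assms(3) graph_on_irrefl[OF assms(1)] by blast
  hence "distinct [s, t, x, r, z]" using \<open>s \<noteq> t\<close> r assms(7,10,11) by auto
  moreover have "E x s" "E x t" "E x r" using assms(3,10,11) r(1) by blast+
  moreover have "E s t" "E s r" "E t r"
    using assms(4-6,10,11) r \<open>s \<noteq> t\<close> sym by auto
  ultimately have "book_at E s t x r z"
    unfolding book_at_def using assms(8,9) sym by auto
  thus False using assms(2) by (simp add: has_bookI)
qed

text \<open>A vertex \<open>y\<close> outside the closed neighbourhood of \<open>x\<close> sees at most one of \<open>a, b, c\<close>, so it
  has a neighbour \<open>w\<close> outside as well, and switching \<open>y w\<close> with a triangle edge breaks the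
  triangle.\<close>
lemma potentially_book_degree3_triangle:
  assumes "finite V" "6 \<le> card V" "graph_on V E" "4 * card V - 2 \<le> deg_sum V E"
    "forces_book (V - {x})" "x \<in> V" "{y \<in> V. E x y} = {a, b, c}" "distinct [a, b, c]"
    "E a b" "E a c" "E b c" "\<forall>y\<in>V. 3 \<le> deg V E y" "\<not> has_book E"
  shows "potentially_book V E"
proof -
  define outer where "outer = V - {x, a, b, c}"
  have unique: "s = t" if "z \<in> outer" "E z s" "E z t" "s \<in> {a, b, c}" "t \<in> {a, b, c}" for z s t
    using unique_nbr_in_triangle_nbrhood[OF assms(3,13,7,9-11)] that unfolding outer_def by blast
  have "{x, a, b, c} \<subseteq> V" using assms(6,7) by blast
  hence "card outer = card V - card {x, a, b, c}" unfolding outer_def by (simp add: card_Diff_subset)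
  hence "card outer \<noteq> 0" using card4_le[of x a b c] assms(2) by linarith
  then obtain y where y: "y \<in> outer" by fastforce
  have "\<exists>w. w \<in> outer \<and> E y w"
  proof (rule ccontr)
    assume "\<nexists>w. w \<in> outer \<and> E y w"
    hence "{z \<in> V. E y z} \<subseteq> {a, b, c}"
      using y assms(7) graph_on_sym[OF assms(3)] unfolding outer_def by blast
    hence "card {z \<in> V. E y z} \<le> Suc 0"
      using unique[OF y] assms(1) by (subst card_le_Suc0_iff_eq) auto
    thus False using assms(12) y unfolding outer_def deg_def by fastforce
  qed
  then obtain w where w: "w \<in> outer" "E y w" by blast
  have perms: "{a, b, c} = {a, c, b}" "{a, b, c} = {b, c, a}" "{a, b, c} = {b, a, c}" by auto
  have y_nonadj: "\<not> E y a \<or> \<not> E y b" using unique[OF y, of a b] assms(8) by auto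
  have w_nonadj: "\<not> E w a \<or> \<not> E w c" "\<not> E w b \<or> \<not> E w c"
    using unique[OF w(1), of a c] unique[OF w(1), of b c] assms(8) by auto
  obtain s t u where stu: "{s, t, u} = {a, b, c}" "distinct [s, t, u]" "\<not> E y s" "\<not> E w t"
  proof -
    have "distinct [a, c, b]" "distinct [b, a, c]" "distinct [b, c, a]" using assms(8) by auto
    thus ?thesis using that[of a b c] that[of a c b] that[of b a c] that[of b c a]
      y_nonadj w_nonadj assms(8) perms by metis
  qed
  have "s \<in> {a, b, c}" "t \<in> {a, b, c}" using stu(1) by blast+
  hence "E s t" using assms(9-11) stu(2) graph_on_sym[OF assms(3)] by auto
  moreover have "y \<notin> {x, s, t, u}" "w \<notin> {x, s, t, u}" using stu(1) y w(1) unfolding outer_def by auto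
  ultimately show ?thesis
    using potentially_book_by_switch_and_reduction[OF assms(1-6) _ stu(2) _ w(2) stu(3,4)] assms(7) stu(1)
    by simp
qed

lemma potentially_book_degree3:
  assumes "finite V" "6 \<le> card V" "graph_on V E" "4 * card V - 2 \<le> deg_sum V E"
    "forces_book (V - {x})" "x \<in> V" "deg V E x = 3" "\<forall>y\<in>V. 3 \<le> deg V E y" "\<not> has_book E"
  shows "potentially_book V E"
proof -
  obtain a b c where abc: "{y \<in> V. E x y} = {a, b, c}" "distinct [a, b, c]"
    using assms(7) unfolding deg_def card_3_iff by auto
  have reduce: "potentially_book V E" if "{y \<in> V. E x y} = {s, t, u}" "distinct [s, t, u]" "\<not> E s t"
    for s t u
    using potentially_book_by_degree3_reduction[OF assms(1-6) that] .
  have "{a, b, c} = {a, c, b}" "{a, b, c} = {b, c, a}" by auto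
  thus ?thesis
    using reduce[of a b c] reduce[of a c b] reduce[of b c a] abc
      potentially_book_degree3_triangle[OF assms(1-6) abc _ _ _ assms(8,9)]
    by auto
qed

section \<open>A 4-regular graph with a book\<close>

lemma exists_4_regular_book_card7:
  assumes "finite V" "card V = 7"
  shows "\<exists>F u v a b c p q r s. graph_on V F \<and> (\<forall>y\<in>V. deg V F y = 4) \<and> book_at F u v a b c \<and>
    distinct [p, q, r, s] \<and> F p q \<and> F q r \<and> F r s \<and> (p, q) \<notin> set (book_edges u v a b c) \<and>
    (q, r) \<notin> set (book_edges u v a b c) \<and> (r, s) \<notin> set (book_edges u v a b c)"
proof -
  obtain xs where xs: "set xs = V" "distinct xs" using finite_distinct_list[OF assms(1)] by blast
  have "length xs = 7" using distinct_card[OF xs(2)] xs(1) assms(2) by simp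
  then obtain w0 w1 w2 w3 w4 w5 w6 where "xs = [w0, w1, w2, w3, w4, w5, w6]"
    by (auto simp: numeral_eq_Suc length_Suc_conv)
  hence w: "distinct [w0, w1, w2, w3, w4, w5, w6]" and V: "V = {w0, w1, w2, w3, w4, w5, w6}"
    using xs by auto
  define F where "F i j \<longleftrightarrow> i \<in> V \<and> j \<in> V \<and> i \<noteq> j \<and> \<not> (i \<in> {w0, w1, w2} \<and> j \<in> {w0, w1, w2}) \<and>
    \<not> ((i = w3 \<and> j = w4) \<or> (i = w4 \<and> j = w3) \<or> (i = w4 \<and> j = w5) \<or> (i = w5 \<and> j = w4) \<or>
       (i = w5 \<and> j = w6) \<or> (i = w6 \<and> j = w5) \<or> (i = w6 \<and> j = w3) \<or> (i = w3 \<and> j = w6))" for i j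
  have "graph_on V F" unfolding graph_on_def F_def by blast
  have "w0 \<noteq> w1" "w0 \<noteq> w2" "w0 \<noteq> w3" "w0 \<noteq> w4" "w0 \<noteq> w5" "w0 \<noteq> w6"
    "w1 \<noteq> w2" "w1 \<noteq> w3" "w1 \<noteq> w4" "w1 \<noteq> w5" "w1 \<noteq> w6"
    "w2 \<noteq> w3" "w2 \<noteq> w4" "w2 \<noteq> w5" "w2 \<noteq> w6"
    "w3 \<noteq> w4" "w3 \<noteq> w5" "w3 \<noteq> w6" "w4 \<noteq> w5" "w4 \<noteq> w6" "w5 \<noteq> w6" using w by auto
  note neq = this this[symmetric]
  have "{j \<in> V. F w0 j} = {w3, w4, w5, w6}" "{j \<in> V. F w1 j} = {w3, w4, w5, w6}"
    "{j \<in> V. F w2 j} = {w3, w4, w5, w6}" "{j \<in> V. F w3 j} = {w0, w1, w2, w5}"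
    "{j \<in> V. F w4 j} = {w0, w1, w2, w6}" "{j \<in> V. F w5 j} = {w0, w1, w2, w3}"
    "{j \<in> V. F w6 j} = {w0, w1, w2, w4}"
    unfolding V F_def using neq by auto
  hence "\<forall>y\<in>V. deg V F y = 4" unfolding V deg_def using neq by auto
  moreover have "book_at F w3 w5 w0 w1 w2" "distinct [w0, w4, w1, w6]" "F w0 w4" "F w4 w1" "F w1 w6"
    unfolding book_at_def F_def using neq V by auto
  moreover have "(w0, w4) \<notin> set (book_edges w3 w5 w0 w1 w2)" "(w4, w1) \<notin> set (book_edges w3 w5 w0 w1 w2)"
    "(w1, w6) \<notin> set (book_edges w3 w5 w0 w1 w2)" unfolding book_edges_def using neq by auto
  ultimately show ?thesis using \<open>graph_on V F\<close> by blast
qed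

lemma
  assumes "finite W" "graph_on W F" "x \<notin> W" "F p q" "F r s" "distinct [p, q, r, s]"
  shows graph_on_insert_on_two_edges:
      "graph_on (insert x W) (add_vertex x {p, q, r, s} (del_edge r s (del_edge p q F)))"
    and deg_insert_on_two_edges:
      "y \<in> insert x W \<Longrightarrow> deg (insert x W) (add_vertex x {p, q, r, s} (del_edge r s (del_edge p q F))) y
        = (if y = x then 4 else deg W F y)"
proof -
  let ?F1 = "del_edge p q F" and ?F2 = "del_edge r s (del_edge p q F)"
  have T: "{p, q, r, s} \<subseteq> W" using graph_onD[OF assms(2)] assms(4,5) by blast
  have g1: "graph_on W ?F1" by (rule graph_on_del_edge[OF assms(2)])
  have g2: "graph_on W ?F2" by (rule graph_on_del_edge[OF g1])
  show "graph_on (insert x W) (add_vertex x {p, q, r, s} ?F2)" by (rule graph_on_add_vertex[OF g2 assms(3) T])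
  assume y: "y \<in> insert x W"
  show "deg (insert x W) (add_vertex x {p, q, r, s} ?F2) y = (if y = x then 4 else deg W F y)"
  proof (cases "y = x")
    case True thus ?thesis using deg_add_vertex_new[OF g2 assms(3) T] assms(6) by simp
  next
    case False
    hence "y \<in> W" using y by simp
    have "?F1 r s" using assms(5,6) by (auto simp: del_edge_def)
    have "deg (insert x W) (add_vertex x {p, q, r, s} ?F2) y
        = deg W ?F2 y + (if y \<in> {p, q, r, s} then 1 else 0)"
      by (rule deg_add_vertex[OF g2 assms(3) T assms(1) \<open>y \<in> W\<close>])
    also have "deg W ?F2 y = deg W ?F1 y - (if y = r \<or> y = s then 1 else 0)"
      by (rule deg_del_edge[OF assms(1) g1 \<open>?F1 r s\<close>])
    also have "deg W ?F1 y = deg W F y - (if y = p \<or> y = q then 1 else 0)"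
      by (rule deg_del_edge[OF assms(1,2,4)])
    finally show ?thesis
      using False assms(6) deg_pos[OF assms(1,2)] assms(4,5) graph_onD(4)[OF assms(2)] by fastforce
  qed
qed

text \<open>The path \<open>p q r s\<close> avoiding the book is where the next vertex \<open>x\<close> goes: \<open>p q\<close> and \<open>r s\<close>
  are replaced by the star at \<open>x\<close>, which leaves the path \<open>p x q r\<close>.\<close>
lemma exists_4_regular_book_with_path:
  "finite V \<Longrightarrow> card V = k + 7 \<Longrightarrow>
    \<exists>F u v a b c p q r s. graph_on V F \<and> (\<forall>y\<in>V. deg V F y = 4) \<and> book_at F u v a b c \<and>
      distinct [p, q, r, s] \<and> F p q \<and> F q r \<and> F r s \<and> (p, q) \<notin> set (book_edges u v a b c) \<and>
      (q, r) \<notin> set (book_edges u v a b c) \<and> (r, s) \<notin> set (book_edges u v a b c)"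
proof (induction k arbitrary: V)
  case 0 thus ?case using exists_4_regular_book_card7 by simp
next
  case (Suc k)
  obtain x where x: "x \<in> V" using Suc.prems by fastforce
  define W where "W = V - {x}"
  have W: "finite W" "card W = k + 7" "x \<notin> W" "V = insert x W"
    using Suc.prems x by (auto simp: W_def)
  obtain F u v a b c p q r s where F: "graph_on W F" "\<forall>y\<in>W. deg W F y = 4" "book_at F u v a b c"
    "distinct [p, q, r, s]" "F p q" "F q r" "F r s" "(p, q) \<notin> set (book_edges u v a b c)"
    "(q, r) \<notin> set (book_edges u v a b c)" "(r, s) \<notin> set (book_edges u v a b c)"
    using Suc.IH[OF W(1,2)] by blast
  let ?H = "add_vertex x {p, q, r, s} (del_edge r s (del_edge p q F))"
  have "graph_on V ?H" "\<forall>y\<in>V. deg V ?H y = 4"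
    using graph_on_insert_on_two_edges[OF W(1) F(1) W(3) F(5,7,4)]
      deg_insert_on_two_edges[OF W(1) F(1) W(3) F(5,7,4)] F(2) W(4) by auto
  moreover have "book_at ?H u v a b c"
    using book_at_del_edge[OF book_at_del_edge[OF F(3,8)] F(10)] by (rule book_at_add_vertex)
  moreover have "{u, v, a, b, c} \<subseteq> W" by (rule book_at_in[OF F(1,3)])
  hence "(p, x) \<notin> set (book_edges u v a b c)" "(x, q) \<notin> set (book_edges u v a b c)"
    using W(3) by (auto simp: book_edges_def)
  moreover have "distinct [p, x, q, r]" using F(4) W(3) graph_onD[OF F(1)] F(5,6) by auto
  moreover have "?H p x" "?H x q" "?H q r" using F(4,6) by (auto simp: add_vertex_def del_edge_def)
  ultimately show ?case using F(9) by blast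
qed

lemma exists_4_regular_book:
  assumes "finite V" "7 \<le> card V"
  shows "\<exists>F. graph_on V F \<and> (\<forall>y\<in>V. deg V F y = 4) \<and> has_book F"
proof -
  have "card V = (card V - 7) + 7" using assms(2) by simp
  then obtain F u v a b c where "graph_on V F" "\<forall>y\<in>V. deg V F y = 4" "book_at F u v a b c"
    using exists_4_regular_book_with_path[OF assms(1)] by blast
  thus ?thesis by (meson has_bookI)
qed

section \<open>The induction\<close>

lemma forces_book_card5: "finite W \<Longrightarrow> card W = 5 \<Longrightarrow> forces_book W"
  unfolding forces_book_def using has_book_card5 potentially_bookI by fastforce

lemma le_4n_plus_1_of_averaged_bound:
  assumes "6 \<le> (n::nat)" "n * (S + 1) \<le> 2 * S + n * (4 * n - 6)"
  shows "S \<le> 4 * n + 1"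
proof (rule ccontr)
  assume "\<not> ?thesis"
  hence "(int n - 2) * (4 * int n + 2) \<le> (int n - 2) * int S" using assms(1) by (intro mult_left_mono) auto
  moreover have "int (n * (S + 1)) \<le> int (2 * S + n * (4 * n - 6))" using assms(2) by (simp only: of_nat_le_iff)
  hence "int n * (int S + 1) \<le> 2 * int S + int n * int (4 * n - 6)"
    by (simp only: of_nat_mult of_nat_add of_nat_1 of_nat_numeral)
  moreover have "int (4 * n - 6) = 4 * int n - 6" using assms(1) by simp
  ultimately show False using assms(1) by (simp add: algebra_simps)
qed

lemma degree_dichotomy:
  assumes "finite V" "graph_on V E" "6 \<le> card V" "4 * card V - 2 \<le> deg_sum V E"
    "\<forall>x\<in>V. deg_sum (V - {x}) (del_vertex x E) < 4 * (card V - 1) - 2"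
  shows "(\<forall>x\<in>V. deg V E x = 4) \<or> ((\<forall>x\<in>V. 3 \<le> deg V E x) \<and> (\<exists>x\<in>V. deg V E x = 3))"
proof -
  let ?n = "card V" and ?S = "deg_sum V E"
  have lower: "?S + 1 \<le> 2 * deg V E x + (4 * ?n - 6)" if "x \<in> V" for x
    using assms(5) that deg_sum_del_vertex[OF assms(1,2) that] assms(3) by fastforce
  have "?n * (?S + 1) = (\<Sum>x\<in>V. ?S + 1)" by simp
  also have "\<dots> \<le> (\<Sum>x\<in>V. 2 * deg V E x + (4 * ?n - 6))" by (rule sum_mono) (rule lower)
  also have "\<dots> = 2 * ?S + ?n * (4 * ?n - 6)" by (simp add: sum.distrib sum_distrib_left)
  finally have "?S \<le> 4 * ?n + 1" using le_4n_plus_1_of_averaged_bound assms(3) by blast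
  moreover have "even ?S" by (rule even_deg_sum[OF assms(1,2)])
  moreover have "S = 4 * n - 2 \<or> S = 4 * n"
    if "S \<le> 4 * n + 1" "even S" "6 \<le> n" "4 * n - 2 \<le> S" for S n :: nat
    using that by presburger
  ultimately have "?S = 4 * ?n - 2 \<or> ?S = 4 * ?n" using assms(3,4) by blast
  thus ?thesis
  proof
    assume S: "?S = 4 * ?n"
    have ge4: "4 \<le> deg V E x" if "x \<in> V" for x using lower[OF that] S assms(3) by linarith
    have "deg V E x = 4" if "x \<in> V" for x
    proof (rule ccontr)
      assume "deg V E x \<noteq> 4"
      hence "4 < deg V E x" using ge4[OF that] by simp
      hence "(\<Sum>x\<in>V. 4) < ?S" using ge4 that assms(1) by (intro sum_strict_mono_ex1) auto
      thus False using S by simp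
    qed
    thus ?thesis by blast
  next
    assume S: "?S = 4 * ?n - 2"
    have ge3: "3 \<le> deg V E x" if "x \<in> V" for x using lower[OF that] S assms(3) by linarith
    have "\<exists>x\<in>V. deg V E x \<le> 3"
    proof (rule ccontr)
      assume "\<not> ?thesis"
      hence "(\<Sum>x\<in>V. 4) \<le> ?S" by (intro sum_mono) auto
      thus False using S assms(3) by simp
    qed
    thus ?thesis using ge3 le_antisym by blast
  qed
qed

lemma potentially_book_if_deletable:
  assumes "finite V" "graph_on V E" "4 * card V - 2 \<le> deg_sum V E" "x \<in> V" "forces_book (V - {x})"
    "4 * (card V - 1) - 2 \<le> deg_sum (V - {x}) (del_vertex x E)"
  shows "potentially_book V E"
proof -
  have "card (V - {x}) = card V - 1" using assms(4) by (rule card_Diff_singleton)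
  hence "potentially_book (V - {x}) (del_vertex x E) \<or> octahedral (V - {x}) (del_vertex x E)"
    using assms(5,6) graph_on_del_vertex[OF assms(2)] unfolding forces_book_def by simp
  thus ?thesis
  proof
    assume oct: "octahedral (V - {x}) (del_vertex x E)"
    hence "deg_sum (V - {x}) (del_vertex x E) = 24" "card V - 1 = 6"
      using \<open>card (V - {x}) = card V - 1\<close> unfolding octahedral_def by simp_all
    hence "0 < deg V E x" using deg_sum_del_vertex[OF assms(1,2,4)] assms(3) by linarith
    thus ?thesis using potentially_book_vertex_over_octahedral[OF assms(1,2,4) oct] by blast
  qed (rule potentially_book_if_del_vertex[OF assms(1,2,4)])
qed

lemma potentially_book_or_octahedral_if_4_regular:
  assumes "finite V" "6 \<le> card V" "graph_on V E" "\<forall>x\<in>V. deg V E x = 4"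
  shows "potentially_book V E \<or> octahedral V E"
proof (cases "card V = 6")
  case True thus ?thesis using assms unfolding octahedral_def by blast
next
  case False
  then obtain F where "graph_on V F" "\<forall>y\<in>V. deg V F y = 4" "has_book F"
    using exists_4_regular_book[OF assms(1)] assms(2) by fastforce
  thus ?thesis using assms(4) potentially_bookI potentially_book_cong by metis
qed

lemma forces_book_step:
  assumes "finite V" "6 \<le> card V" "\<And>x. x \<in> V \<Longrightarrow> forces_book (V - {x})"
  shows "forces_book V"
  unfolding forces_book_def
proof (intro allI impI)
  fix E assume E: "graph_on V E" "4 * card V - 2 \<le> deg_sum V E"
  consider "has_book E" | "\<exists>x\<in>V. 4 * (card V - 1) - 2 \<le> deg_sum (V - {x}) (del_vertex x E)"
    | "\<not> has_book E" "\<forall>x\<in>V. deg_sum (V - {x}) (del_vertex x E) < 4 * (card V - 1) - 2"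
    by force
  thus "potentially_book V E \<or> octahedral V E"
  proof cases
    case 1 thus ?thesis using E(1) potentially_bookI by blast
  next
    case 2 thus ?thesis using potentially_book_if_deletable[OF assms(1) E] assms(3) by blast
  next
    case 3
    hence "(\<forall>x\<in>V. deg V E x = 4) \<or> ((\<forall>x\<in>V. 3 \<le> deg V E x) \<and> (\<exists>x\<in>V. deg V E x = 3))"
      using degree_dichotomy[OF assms(1) E(1) assms(2) E(2)] by blast
    thus ?thesis
      using potentially_book_or_octahedral_if_4_regular[OF assms(1,2) E(1)]
        potentially_book_degree3[OF assms(1,2) E assms(3)] 3(1) by blast
  qed
qed

lemma forces_book: "finite V \<Longrightarrow> 5 \<le> card V \<Longrightarrow> forces_book V"
proof (induction "card V" arbitrary: V rule: less_induct)
  case less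
  show ?case
  proof (cases "card V = 5")
    case True thus ?thesis using forces_book_card5 less.prems(1) by blast
  next
    case False
    have "forces_book (V - {x})" if "x \<in> V" for x
      using less.hyps[of "V - {x}"] less.prems False that by (simp add: card_Diff_singleton)
    thus ?thesis using forces_book_step[OF less.prems(1)] less.prems(2) False by simp
  qed
qed

section \<open>Degree sequences\<close>

lemma realizes_iff_graph_on:
  "realizes E S \<longleftrightarrow> graph_on {0..<length S} E \<and> (\<forall>i<length S. deg {0..<length S} E i = S ! i)"
proof -
  have "simple_graph_on n E \<longleftrightarrow> graph_on {0..<n} E" for n
    unfolding simple_graph_on_def graph_on_def by auto
  moreover have "degree n E i = deg {0..<n} E i" for n i
    unfolding degree_def deg_def by (rule arg_cong[where f = card]) auto
  ultimately show ?thesis unfolding realizes_def by simp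
qed

lemma deg_sum_realization:
  "realizes E S \<Longrightarrow> deg_sum {0..<length S} E = sum_list S"
  unfolding realizes_iff_graph_on by (simp add: sum_list_sum_nth)

lemma contains_K311_iff_has_book:
  assumes "graph_on {0..<n} E"
  shows "contains_subgraph n E 5 K311 \<longleftrightarrow> has_book E"
proof
  assume "contains_subgraph n E 5 K311"
  then obtain f where f: "inj_on f {0..<5}" "\<forall>i<5. \<forall>j<5. K311 i j \<longrightarrow> E (f i) (f j)"
    unfolding contains_subgraph_def by blast
  have "K311 3 4" "K311 3 0" "K311 3 1" "K311 3 2" "K311 4 0" "K311 4 1" "K311 4 2"
    by (simp_all add: K311_def part311_def)
  hence "E (f 3) (f 4)" "E (f 3) (f 0)" "E (f 3) (f 1)" "E (f 3) (f 2)" "E (f 4) (f 0)"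
    "E (f 4) (f 1)" "E (f 4) (f 2)"
    using f(2) by simp_all
  moreover have "distinct [f 3, f 4, f 0, f 1, f 2]"
    using inj_on_eq_iff[OF f(1)] by simp
  ultimately have "book_at E (f 3) (f 4) (f 0) (f 1) (f 2)" unfolding book_at_def by blast
  thus "has_book E" by (rule has_bookI)
next
  assume "has_book E"
  then obtain u v a b c where book: "book_at E u v a b c" unfolding has_book_def by blast
  let ?f = "nth [a, b, c, u, v]"
  have "distinct [a, b, c, u, v]" using book unfolding book_at_def by auto
  hence "inj_on ?f {0..<5}" using inj_on_nth[of "[a, b, c, u, v]" "{0..<5}"] by simp
  moreover have "?f ` {0..<5} \<subseteq> {0..<n}"
    using book_at_in[OF assms book] by (auto simp: less_Suc_eq numeral_eq_Suc)
  moreover have "\<forall>i<5. \<forall>j<5. K311 i j \<longrightarrow> E (?f i) (?f j)"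
    using book graph_on_sym[OF assms]
    by (auto simp: less_Suc_eq numeral_eq_Suc K311_def part311_def book_at_def)
  ultimately show "contains_subgraph n E 5 K311" unfolding contains_subgraph_def by blast
qed

lemma potentially_graphic_K311_iff:
  "potentially_graphic 5 K311 S \<longleftrightarrow> (\<exists>E. realizes E S \<and> has_book E)"
  unfolding potentially_graphic_def graphical_def
  using contains_K311_iff_has_book realizes_iff_graph_on by blast

lemma potentially_graphic_K311_if_sum_large:
  assumes "5 \<le> length S" "graphical S" "4 * length S - 2 \<le> sum_list S"
  shows "potentially_graphic 5 K311 S \<or> S = [4, 4, 4, 4, 4, 4]"
proof -
  let ?V = "{0..<length S}"
  obtain E where E: "realizes E S" using assms(2) unfolding graphical_def by blast
  hence E': "graph_on ?V E" "\<forall>i<length S. deg ?V E i = S ! i" unfolding realizes_iff_graph_on by auto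
  have "potentially_book ?V E \<or> octahedral ?V E"
    using forces_book[of ?V] assms(1,3) E' deg_sum_realization[OF E] unfolding forces_book_def by simp
  thus ?thesis
  proof
    assume "potentially_book ?V E"
    then obtain F where "graph_on ?V F" "\<forall>i\<in>?V. deg ?V F i = deg ?V E i" "has_book F"
      unfolding potentially_book_def by blast
    hence "realizes F S \<and> has_book F" unfolding realizes_iff_graph_on using E'(2) by simp
    thus ?thesis unfolding potentially_graphic_K311_iff by blast
  next
    assume "octahedral ?V E"
    hence "length S = 6" "\<forall>i<6. S ! i = 4" using E'(2) unfolding octahedral_def by auto
    hence "S = replicate 6 4" by (simp add: list_eq_iff_nth_eq)
    thus ?thesis by (simp add: numeral_eq_Suc)
  qed
qed

definition wheel :: "nat \<Rightarrow> nat \<Rightarrow> nat \<Rightarrow> bool" where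
  "wheel n i j \<longleftrightarrow> i < n \<and> j < n \<and> i \<noteq> j \<and>
     (i = 0 \<or> j = 0 \<or> j = i + 1 \<or> i = j + 1 \<or> (i = 1 \<and> j = n - 1) \<or> (j = 1 \<and> i = n - 1))"

definition wheel_degrees :: "nat \<Rightarrow> nat list" where
  "wheel_degrees n = (n - 1) # replicate (n - 1) 3"

lemma length_wheel_degrees: "1 \<le> n \<Longrightarrow> length (wheel_degrees n) = n"
  by (simp add: wheel_degrees_def)

lemma nth_wheel_degrees: "1 \<le> n \<Longrightarrow> i < n \<Longrightarrow> wheel_degrees n ! i = (if i = 0 then n - 1 else 3)"
  by (cases i) (auto simp: wheel_degrees_def)

lemma sum_list_wheel_degrees: "1 \<le> n \<Longrightarrow> sum_list (wheel_degrees n) = 4 * n - 4"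
  by (simp add: wheel_degrees_def sum_list_replicate)

lemma realizes_wheel:
  assumes "5 \<le> n"
  shows "realizes (wheel n) (wheel_degrees n)"
proof -
  have "deg {0..<n} (wheel n) i = wheel_degrees n ! i" if "i < n" for i
  proof -
    have "{j \<in> {0..<n}. wheel n i j} =
        (if i = 0 then {1..<n} else if i = 1 then {0, 2, n - 1}
         else if i = n - 1 then {0, n - 2, 1} else {0, i - 1, i + 1})"
      using assms that by (auto simp: wheel_def)
    moreover have "card {0, i - 1, i + 1} = 3" if "2 \<le> i" using that by auto
    ultimately show ?thesis using assms that by (simp add: deg_def nth_wheel_degrees)
  qed
  moreover have "graph_on {0..<n} (wheel n)" unfolding graph_on_def wheel_def by auto
  ultimately show ?thesis unfolding realizes_iff_graph_on using length_wheel_degrees assms by simp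
qed

lemma wheel_degrees_not_potentially_K311:
  assumes "5 \<le> n"
  shows "\<not> potentially_graphic 5 K311 (wheel_degrees n)"
proof
  assume "potentially_graphic 5 K311 (wheel_degrees n)"
  then obtain E u v a b c where E: "realizes E (wheel_degrees n)" "book_at E u v a b c"
    unfolding potentially_graphic_K311_iff has_book_def by blast
  hence g: "graph_on {0..<n} E" and d: "\<forall>i<n. deg {0..<n} E i = wheel_degrees n ! i"
    using length_wheel_degrees[of n] assms unfolding realizes_iff_graph_on by auto
  have uv: "u < n" "v < n" "u \<noteq> v" using book_at_in[OF g E(2)] E(2) unfolding book_at_def by auto
  have "4 \<le> wheel_degrees n ! u" "4 \<le> wheel_degrees n ! v"
    using spine_deg_ge_4[OF _ g E(2)] d uv by auto
  hence "u = 0" "v = 0" using nth_wheel_degrees[of n] uv assms by (auto split: if_splits)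
  thus False using uv(3) by simp
qed

definition octahedron :: "nat \<Rightarrow> nat \<Rightarrow> bool" where
  "octahedron i j \<longleftrightarrow> i < 6 \<and> j < 6 \<and> i \<noteq> j \<and> i + j \<noteq> 5"

lemma realizes_octahedron: "realizes octahedron [4, 4, 4, 4, 4, 4]"
proof -
  have "deg {0..<6} octahedron i = 4" if "i < 6" for i
  proof -
    have "{j \<in> {0..<6}. octahedron i j} = {0..<6} - {i, 5 - i}"
      using that unfolding octahedron_def by auto
    moreover have "5 - i \<noteq> i" by presburger
    ultimately show ?thesis using that by (simp add: deg_def card_Diff_subset)
  qed
  moreover have "graph_on {0..<6} octahedron" unfolding graph_on_def octahedron_def by auto
  ultimately show ?thesis unfolding realizes_iff_graph_on by (simp add: numeral_eq_Suc less_Suc_eq)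
qed

lemma octahedron_degrees_not_potentially_K311: "\<not> potentially_graphic 5 K311 [4, 4, 4, 4, 4, 4]"
proof
  assume "potentially_graphic 5 K311 [4, 4, 4, 4, 4, 4]"
  then obtain E where E: "realizes E [4, 4, 4, 4, 4, 4]" "has_book E"
    unfolding potentially_graphic_K311_iff by blast
  moreover have "[4, 4, 4, 4, 4, 4] ! i = (4::nat)" if "i < 6" for i
    using that by (auto simp: numeral_eq_Suc less_Suc_eq)
  moreover have "length [4, 4, 4, 4, 4, 4::nat] = 6" by simp
  ultimately have "octahedral {0..<6} E"
    unfolding realizes_iff_graph_on octahedral_def by (simp only:) simp
  thus False using octahedral_no_book E(2) by blast
qed

lemma sigma_pot_eqI:
  assumes "even l" "\<And>S. length S = n \<Longrightarrow> graphical S \<Longrightarrow> l \<le> sum_list S \<Longrightarrow> potentially_graphic k F S"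
    and "length S\<^sub>0 = n" "graphical S\<^sub>0" "sum_list S\<^sub>0 = l - 2" "\<not> potentially_graphic k F S\<^sub>0"
  shows "sigma_pot k F n = l"
  unfolding sigma_pot_def
proof (rule Least_equality)
  show "even l \<and> (\<forall>S. length S = n \<and> graphical S \<and> l \<le> sum_list S \<longrightarrow> potentially_graphic k F S)"
    using assms(1,2) by blast
next
  fix l' assume l': "even l' \<and> (\<forall>S. length S = n \<and> graphical S \<and> l' \<le> sum_list S \<longrightarrow> potentially_graphic k F S)"
  show "l \<le> l'"
  proof (rule ccontr)
    assume "\<not> l \<le> l'"
    hence "l' \<le> sum_list S\<^sub>0" using l' assms(1,5) by (auto elim!: evenE)
    thus False using l' assms(3,4,6) by blast
  qed
qed

theorem theorem2:
  shows "(\<forall>n::nat. (n = 5 \<or> n \<ge> 7) \<longrightarrow> sigma_pot 5 K311 n = 4 * n - 2)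
    \<and> (\<forall>S. length S = 6 \<and> graphical S \<and> sum_list S \<ge> 22 \<longrightarrow>
           potentially_graphic 5 K311 S \<or> S = [4,4,4,4,4,4])
    \<and> \<not> potentially_graphic 5 K311 [4,4,4,4,4,4]
    \<and> sigma_pot 5 K311 6 = 26"
proof (intro conjI allI impI)
  fix n :: nat assume "n = 5 \<or> n \<ge> 7"
  hence n: "5 \<le> n" "n \<noteq> 6" by auto
  show "sigma_pot 5 K311 n = 4 * n - 2"
  proof (rule sigma_pot_eqI)
    show "potentially_graphic 5 K311 S" if "length S = n" "graphical S" "4 * n - 2 \<le> sum_list S" for S
      using potentially_graphic_K311_if_sum_large[of S] that n by auto
    show "graphical (wheel_degrees n)" unfolding graphical_def using realizes_wheel n(1) by blast
  qed (use n length_wheel_degrees sum_list_wheel_degrees wheel_degrees_not_potentially_K311 in auto)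
next
  fix S :: "nat list" assume "length S = 6 \<and> graphical S \<and> 22 \<le> sum_list S"
  thus "potentially_graphic 5 K311 S \<or> S = [4, 4, 4, 4, 4, 4]"
    using potentially_graphic_K311_if_sum_large[of S] by simp
next
  show "\<not> potentially_graphic 5 K311 [4, 4, 4, 4, 4, 4]" by (rule octahedron_degrees_not_potentially_K311)
next
  show "sigma_pot 5 K311 6 = 26"
  proof (rule sigma_pot_eqI)
    show "potentially_graphic 5 K311 S" if "length S = 6" "graphical S" "26 \<le> sum_list S" for S
      using potentially_graphic_K311_if_sum_large[of S] that by auto
    show "graphical [4, 4, 4, 4, 4, 4]" unfolding graphical_def using realizes_octahedron by blast
  qed (use octahedron_degrees_not_potentially_K311 in auto)
qed

end
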